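(* Let $\mathcal H$ be a (finite) higraph with path DGA $(\mathcal A,\delta)$, map $\partial$ and pairing $\langle\cdot,\cdot\rangle$ as in the context. Then $\langle\partial a,b\rangle=\langle a,\delta b\rangle$ for all $a,b\in\mathcal A$. Furthermore $\partial^2=0$ and $\delta^2=0$.
   Context: $\mathbb F=\{0,1\}$. A directed hypergraph $\mathcal H=(\mathcal V,\mathcal E)$ has edges $\varepsilon=(I,J)\in2^{\mathcal V}\times2^{\mathcal V}$, source $I$, target $J$. It is a higraph if for all edges $\varepsilon,\varepsilon'$: (Transitive) if $t(\varepsilon)\cap s(\varepsilon')\ne\emptyset$ then it equals $\{K\}$ for one vertex $K$, the unions $s(\varepsilon)\cup(s(\varepsilon')\setminus\{K\})$ and $(t(\varepsilon)\setminus\{K\})\cup t(\varepsilon')$ are disjoint unions and their pair is an edge; (Acyclic) if $t(\varepsilon)\cap s(\varepsilon')$ and $t(\varepsilon')\cap s(\varepsilon)$ are both non-empty then $\varepsilon=\varepsilon'=(\{K\},\{K\})$. $\mathcal V$ is finite. A path is a non-empty finite directed tree $T=(V,E)$ (nodes; arrows, called breaks) with $\rho:V\to\mathcal E$ such that for each arrow $e$, $t(\rho(s(e)))\cap s(\rho(t(e)))$ is a single vertex $\rho(e)$, and distinct arrows with a common source node or common target node have distinct $\rho(e)$; label-compatible tree isomorphisms identify paths. Length = number of nodes. Source $s(\rho)=\bigcup_v(s(\rho(v))\setminus\{\rho(e):t(e)=v\})$, target $t(\rho)=\bigcup_v(t(\rho(v))\setminus\{\rho(e):s(e)=v\})$;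 a vertex of $s(\rho)$ in $s(\rho(v))$ is sourced by $v$, a vertex of $t(\rho)$ in $t(\rho(v))$ is targeted by $v$. Gluing $q(\rho,e)$ at a break $e$: contract the arrow $e$ to a node $v^*$, keep other labels, and set $\rho(v^* )=(s(\rho'),t(\rho'))$ with $\rho'$ the subpath on the endpoints of $e$. Refinement $r((\rho,v),\rho'')$ for a node $v$ and a path $\rho''$ with $s(\rho'')=s(\rho(v))$, $t(\rho'')=t(\rho(v))$: replace $v$ by the tree of $\rho''$, each arrow $(a,v)$ by $(a,v'')$ with $v''$ the node of $\rho''$ sourcing $\rho((a,v))$, each arrow $(v,b)$ by $(v'',b)$ with $v''$ targeting $\rho((v,b))$; it is $0$ if $\rho''$ is not compatible. Path DGA: $\mathcal A$ is the $\mathbb F$-vector space with basis the paths, graded by length; product $\rho_1\rho_2$ is the concatenation (disjoint union of trees plus the arrow from the node of $\rho_1$ targeting $K$ to the node of $\rho_2$ sourcing $K$) when $t(\rho_1)\cap s(\rho_2)=\{K\}$, and $0$ if this intersection is empty. $\delta\rho=\sum_{v\in V}\sum_{\rho''\text{ of length }2}r((\rho,v),\rho'')$ and $\partial\rho=\sum_{e\in E}q(\rho,e)$, extended linearly. $\langle\rho_1,\rho_2\rangle=1$ if $\rho_1=\rho_2$, $0$ otherwise, extended bilinearly. *)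

theory Defs
  imports Main
begin

type_synonym 'v hedge = "'v set \<times> 'v set"

text \<open>A directed hypergraph on the finite vertex type 'v is given by its edge set E;
  fst = source, snd = target.\<close>

definition is_higraph :: "'v hedge set \<Rightarrow> bool" where
  "is_higraph E \<longleftrightarrow>
     (\<forall>\<epsilon>\<in>E. \<forall>\<epsilon>'\<in>E. snd \<epsilon> \<inter> fst \<epsilon>' \<noteq> {} \<longrightarrow>
        (\<exists>K. snd \<epsilon> \<inter> fst \<epsilon>' = {K}
           \<and> fst \<epsilon> \<inter> (fst \<epsilon>' - {K}) = {}
           \<and> (snd \<epsilon> - {K}) \<inter> snd \<epsilon>' = {}
           \<and> (fst \<epsilon> \<union> (fst \<epsilon>' - {K}), (snd \<epsilon> - {K}) \<union> snd \<epsilon>') \<in> E))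
   \<and> (\<forall>\<epsilon>\<in>E. \<forall>\<epsilon>'\<in>E. snd \<epsilon> \<inter> fst \<epsilon>' \<noteq> {} \<and> snd \<epsilon>' \<inter> fst \<epsilon> \<noteq> {} \<longrightarrow>
        (\<exists>K. \<epsilon> = ({K}, {K}) \<and> \<epsilon>' = ({K}, {K})))"

record 'v ptree =
  nodes :: "nat set"
  arrs  :: "(nat \<times> nat) set"
  lab   :: "nat \<Rightarrow> 'v hedge"

definition is_dtree :: "'v ptree \<Rightarrow> bool" where
  "is_dtree T \<longleftrightarrow> finite (nodes T) \<and> nodes T \<noteq> {} \<and> arrs T \<subseteq> nodes T \<times> nodes T
     \<and> (\<forall>x. (x, x) \<notin> arrs T)
     \<and> (\<forall>x\<in>nodes T. \<forall>y\<in>nodes T. (x, y) \<in> (arrs T \<union> (arrs T)\<inverse>)\<^sup>*)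
     \<and> card (arrs T) + 1 = card (nodes T)"

definition alab :: "'v ptree \<Rightarrow> nat \<times> nat \<Rightarrow> 'v" where
  "alab T e = the_elem (snd (lab T (fst e)) \<inter> fst (lab T (snd e)))"

definition is_path :: "'v hedge set \<Rightarrow> 'v ptree \<Rightarrow> bool" where
  "is_path E T \<longleftrightarrow> is_dtree T
     \<and> (\<forall>x\<in>nodes T. lab T x \<in> E)
     \<and> (\<forall>e\<in>arrs T. \<exists>K. snd (lab T (fst e)) \<inter> fst (lab T (snd e)) = {K})
     \<and> (\<forall>e\<in>arrs T. \<forall>e'\<in>arrs T. e \<noteq> e' \<and> (fst e = fst e' \<or> snd e = snd e')
            \<longrightarrow> alab T e \<noteq> alab T e')"

definition psrc :: "'v ptree \<Rightarrow> 'v set" where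
  "psrc T = (\<Union>x\<in>nodes T. fst (lab T x) - {alab T e | e. e \<in> arrs T \<and> snd e = x})"

definition ptgt :: "'v ptree \<Rightarrow> 'v set" where
  "ptgt T = (\<Union>x\<in>nodes T. snd (lab T x) - {alab T e | e. e \<in> arrs T \<and> fst e = x})"

definition ptree_iso :: "'v ptree \<Rightarrow> 'v ptree \<Rightarrow> bool" where
  "ptree_iso T T' \<longleftrightarrow> (\<exists>f. bij_betw f (nodes T) (nodes T')
      \<and> arrs T' = (\<lambda>(a, b). (f a, f b)) ` arrs T
      \<and> (\<forall>x\<in>nodes T. lab T' (f x) = lab T x))"

text \<open>A path (basis element of the path DGA) is an isomorphism class of concrete paths.\<close>
definition cls :: "'v ptree \<Rightarrow> 'v ptree set" where
  "cls T = {T'. ptree_iso T T'}"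

definition paths :: "'v hedge set \<Rightarrow> 'v ptree set set" where
  "paths E = {cls T | T. is_path E T}"

definition rep :: "'v ptree set \<Rightarrow> 'v ptree" where
  "rep C = (SOME T. T \<in> C)"

text \<open>Elements of the F-vector space A (F = {0,1}): finite sets of basis paths
  (coefficient 1 exactly on the members); addition is symmetric difference.\<close>
definition pathDGA :: "'v hedge set \<Rightarrow> 'v ptree set set set" where
  "pathDGA E = {a. finite a \<and> a \<subseteq> paths E}"

text \<open>F-linear combination (sum over a finite index family) of concrete trees.\<close>
definition f2sum :: "('i \<Rightarrow> 'v ptree) \<Rightarrow> 'i set \<Rightarrow> 'v ptree set set" where
  "f2sum g I = {C. odd (card {i\<in>I. cls (g i) = C})}"

text \<open>Linear extension of a map defined on basis paths.\<close>
definition lin :: "('v ptree set \<Rightarrow> 'v ptree set set) \<Rightarrow> 'v ptree set set \<Rightarrow> 'v ptree set set" where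
  "lin F a = {C. odd (card {D\<in>a. C \<in> F D})}"

definition glue :: "'v ptree \<Rightarrow> nat \<times> nat \<Rightarrow> 'v ptree" where
  "glue T e = (let a = fst e; b = snd e; K = alab T e; ren = (\<lambda>z. if z = b then a else z) in
     \<lparr> nodes = nodes T - {b},
       arrs = (\<lambda>(x, y). (ren x, ren y)) ` (arrs T - {e}),
       lab = (lab T)(a := (fst (lab T a) \<union> (fst (lab T b) - {K}),
                           (snd (lab T a) - {K}) \<union> snd (lab T b))) \<rparr>)"

text \<open>The length-2 path x -> y with labels e1, e2 (every length-2 path is isomorphic
  to exactly one of these).\<close>
definition len2 :: "'v hedge \<Rightarrow> 'v hedge \<Rightarrow> 'v ptree" where
  "len2 e1 e2 = \<lparr> nodes = {0, 1}, arrs = {(0, 1)}, lab = (\<lambda>n. if n = 0 then e1 else e2) \<rparr>"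

text \<open>Replace node v by the length-2 path len2 e1 e2 (node v plays the role of its first
  node, a fresh node y its second node).\<close>
definition refine :: "'v ptree \<Rightarrow> nat \<Rightarrow> 'v hedge \<Rightarrow> 'v hedge \<Rightarrow> 'v ptree" where
  "refine T v e1 e2 = (let y = Suc (Max (nodes T)) in
     \<lparr> nodes = insert y (nodes T),
       arrs = {e \<in> arrs T. fst e \<noteq> v \<and> snd e \<noteq> v} \<union> {(v, y)}
              \<union> {(a, if alab T (a, v) \<in> fst e1 then v else y) | a. (a, v) \<in> arrs T}
              \<union> {(if alab T (v, b) \<in> snd e2 then y else v, b) | b. (v, b) \<in> arrs T},
       lab = (lab T)(v := e1, y := e2) \<rparr>)"

text \<open>Index set of the non-zero terms r((rho,v),rho'') of delta rho: length-2 paths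
  rho'' with the same source and target as rho(v), for which the refinement is a path.\<close>
definition refine_terms :: "'v hedge set \<Rightarrow> 'v ptree \<Rightarrow> (nat \<times> 'v hedge \<times> 'v hedge) set" where
  "refine_terms E T = {(v, e1, e2). v \<in> nodes T \<and> is_path E (len2 e1 e2)
      \<and> psrc (len2 e1 e2) = fst (lab T v) \<and> ptgt (len2 e1 e2) = snd (lab T v)
      \<and> is_path E (refine T v e1 e2)}"

definition bdry_tree :: "'v ptree \<Rightarrow> 'v ptree set set" where
  "bdry_tree T = f2sum (glue T) (arrs T)"

definition delta_tree :: "'v hedge set \<Rightarrow> 'v ptree \<Rightarrow> 'v ptree set set" where
  "delta_tree E T = f2sum (\<lambda>(v, e1, e2). refine T v e1 e2) (refine_terms E T)"

definition bdry :: "'v ptree set set \<Rightarrow> 'v ptree set set" where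
  "bdry a = lin (\<lambda>C. bdry_tree (rep C)) a"

definition delta :: "'v hedge set \<Rightarrow> 'v ptree set set \<Rightarrow> 'v ptree set set" where
  "delta E a = lin (\<lambda>C. delta_tree E (rep C)) a"

text \<open>Pairing with values in F = {0,1}, encoded as bool (True = 1).\<close>
definition pairing :: "'v ptree set set \<Rightarrow> 'v ptree set set \<Rightarrow> bool" where
  "pairing a b = odd (card (a \<inter> b))"

end

theory Submission
  imports Defs "HOL-Combinatorics.Cycles" "HOL-Computational_Algebra.Primes"
    "HOL-Library.Disjoint_Sets" "HOL-Library.Z2"
begin

text \<open>
  Over F = {0, 1} the pairing identity reduces to basis paths \<sigma>, \<rho>: the number of arrows of \<sigma>
  whose gluing is isomorphic to \<rho> equals the number of refinement data (v, e1, e2) of \<rho> whose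
  refinement is isomorphic to \<sigma>. Gluing the arrow (a, b) and refining the resulting node back into
  the labels of a and b are mutually inverse up to isomorphism, which gives a map between the two
  index sets; it is a bijection because a path has no non-trivial label-preserving automorphism
  (distinct arrows at a node carry distinct vertices, so an automorphism fixing one node fixes all,
  and a fixpoint-free one of prime order would make that prime divide both the number of nodes and
  the number of arrows of a tree).

  For \<partial> \<circ> \<partial> = 0, gluing two distinct arrows in either order gives isomorphic paths (the higraph axioms
  make the merged labels agree), so the terms of \<partial>(\<partial> \<sigma>) cancel in pairs. Finally \<delta> \<circ> \<delta> = 0 follows
  from \<partial> \<circ> \<partial> = 0 by the duality.
\<close>

section \<open>Counting modulo two\<close>

lemma sum_card_filter_swap:
  assumes "finite A" "finite B"
  shows "(\<Sum>x\<in>A. card {y\<in>B. R x y}) = (\<Sum>y\<in>B. card {x\<in>A. R x y})"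
proof -
  have "(\<Sum>x\<in>A. card {y\<in>B. R x y}) = (\<Sum>x\<in>A. \<Sum>y\<in>B. if R x y then 1 else 0)"
    using assms by (simp add: sum.If_cases Int_def conj_commute)
  also have "\<dots> = (\<Sum>y\<in>B. \<Sum>x\<in>A. if R x y then 1 else 0)"
    by (rule sum.swap)
  also have "\<dots> = (\<Sum>y\<in>B. card {x\<in>A. R x y})"
    using assms by (simp add: sum.If_cases Int_def conj_commute)
  finally show ?thesis .
qed

lemma card_filter_eq_sum_fibres:
  assumes "finite I"
  shows "card {i\<in>I. P (h i)} = (\<Sum>C\<in>{C\<in>h ` I. P C}. card {i\<in>I. h i = C})"
proof -
  let ?S = "{i\<in>I. P (h i)}" and ?T = "{C\<in>h ` I. P C}"
  have "(\<Sum>C\<in>?T. sum (\<lambda>_. 1::nat) {i. i \<in> ?S \<and> h i = C}) = sum (\<lambda>_. 1::nat) ?S"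
    using assms by (intro sum.group) auto
  moreover have "\<And>C. C \<in> ?T \<Longrightarrow> {i. i \<in> ?S \<and> h i = C} = {i\<in>I. h i = C}"
    by auto
  ultimately show ?thesis
    by (metis (no_types, lifting) card_eq_sum sum.cong)
qed

lemma even_card_involution:
  assumes "\<And>x. x \<in> S \<Longrightarrow> f x \<in> S" "\<And>x. x \<in> S \<Longrightarrow> f (f x) = x" "\<And>x. x \<in> S \<Longrightarrow> f x \<noteq> x"
  shows "even (card S)"
proof -
  have "(\<Sum>x\<in>S. 1 :: bit) = 0"
    by (rule sum_involution_eq_0[where h = f]) (use assms in auto)
  moreover have "of_nat n = (0 :: bit) \<longleftrightarrow> even n" for n
    by (induction n) auto
  ultimately show ?thesis by simp
qed

lemma f2sum_mem: "C \<in> f2sum g I \<longleftrightarrow> odd (card {i\<in>I. cls (g i) = C})"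
  by (simp add: f2sum_def)

lemma f2sum_subset: "f2sum g I \<subseteq> cls ` g ` I"
proof
  fix C assume "C \<in> f2sum g I"
  then have "odd (card {i\<in>I. cls (g i) = C})" by (simp add: f2sum_def)
  then have "{i\<in>I. cls (g i) = C} \<noteq> {}" by (metis card.empty even_zero)
  then show "C \<in> cls ` g ` I" by blast
qed

lemma finite_f2sum: "finite I \<Longrightarrow> finite (f2sum g I)"
  by (rule finite_subset[OF f2sum_subset]) simp

lemma odd_card_f2sum_filter:
  assumes "finite I"
  shows "odd (card {C\<in>f2sum g I. P C}) \<longleftrightarrow> odd (card {i\<in>I. P (cls (g i))})"
proof -
  let ?h = "\<lambda>i. cls (g i)"
  have "card {i\<in>I. P (?h i)} = (\<Sum>C\<in>{C\<in>?h ` I. P C}. card {i\<in>I. ?h i = C})"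
    using card_filter_eq_sum_fibres[OF assms] .
  moreover have "odd (\<Sum>C\<in>{C\<in>?h ` I. P C}. card {i\<in>I. ?h i = C})
     \<longleftrightarrow> odd (card {C\<in>{C\<in>?h ` I. P C}. odd (card {i\<in>I. ?h i = C})})"
    using assms by (simp add: even_sum_iff)
  moreover have "{C\<in>{C\<in>?h ` I. P C}. odd (card {i\<in>I. ?h i = C})} = {C\<in>f2sum g I. P C}"
    using f2sum_subset[of g I] by (auto simp: f2sum_def image_image)
  ultimately show ?thesis by simp
qed

lemma lin_mem: "C \<in> lin F a \<longleftrightarrow> odd (card {D\<in>a. C \<in> F D})"
  by (simp add: lin_def)

lemma lin_subset: "lin F a \<subseteq> (\<Union>D\<in>a. F D)"
proof
  fix C assume "C \<in> lin F a"
  then have "odd (card {D\<in>a. C \<in> F D})" by (simp add: lin_def)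
  then have "{D\<in>a. C \<in> F D} \<noteq> {}" by (metis card.empty even_zero)
  then show "C \<in> (\<Union>D\<in>a. F D)" by blast
qed

lemma odd_card_lin_filter:
  assumes "finite a" "\<And>D. D \<in> a \<Longrightarrow> finite (F D)"
  shows "odd (card {C\<in>lin F a. P C}) \<longleftrightarrow> odd (\<Sum>D\<in>a. card {C\<in>F D. P C})"
proof -
  let ?U = "{C\<in>(\<Union>D\<in>a. F D). P C}"
  have fU: "finite ?U" using assms by auto
  have "{C\<in>lin F a. P C} = {C\<in>?U. odd (card {D\<in>a. C \<in> F D})}"
    using lin_subset[of F a] by (auto simp: lin_def)
  then have "odd (card {C\<in>lin F a. P C}) \<longleftrightarrow> odd (\<Sum>C\<in>?U. card {D\<in>a. C \<in> F D})"
    using fU by (simp add: even_sum_iff)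
  also have "(\<Sum>C\<in>?U. card {D\<in>a. C \<in> F D}) = (\<Sum>D\<in>a. card {C\<in>?U. C \<in> F D})"
    using sum_card_filter_swap[OF fU assms(1)] .
  also have "\<dots> = (\<Sum>D\<in>a. card {C\<in>F D. P C})"
    by (rule sum.cong) (auto intro!: arg_cong[where f=card])
  finally show ?thesis .
qed

section \<open>Isomorphisms\<close>

definition iso_by :: "(nat \<Rightarrow> nat) \<Rightarrow> 'v ptree \<Rightarrow> 'v ptree \<Rightarrow> bool" where
  "iso_by f T T' \<longleftrightarrow> bij_betw f (nodes T) (nodes T')
      \<and> arrs T' = (\<lambda>(a, b). (f a, f b)) ` arrs T
      \<and> (\<forall>x\<in>nodes T. lab T' (f x) = lab T x)"

lemma ptree_iso_iff: "ptree_iso T T' \<longleftrightarrow> (\<exists>f. iso_by f T T')"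
  by (simp add: ptree_iso_def iso_by_def)

definition wf_ptree :: "'v ptree \<Rightarrow> bool" where
  "wf_ptree T \<longleftrightarrow> arrs T \<subseteq> nodes T \<times> nodes T"

lemma dtree_wf_ptree: "is_dtree T \<Longrightarrow> wf_ptree T"
  by (simp add: is_dtree_def wf_ptree_def)

lemma path_is_dtree: "is_path E T \<Longrightarrow> is_dtree T"
  by (simp add: is_path_def)

lemma iso_by_id: "iso_by id T T"
  by (simp add: iso_by_def)

lemma iso_by_wf_ptree: "iso_by f T T' \<Longrightarrow> wf_ptree T \<Longrightarrow> wf_ptree T'"
  by (auto simp: iso_by_def wf_ptree_def bij_betw_def)

lemma iso_by_arr: "iso_by f T T' \<Longrightarrow> (x, y) \<in> arrs T \<Longrightarrow> (f x, f y) \<in> arrs T'"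
  by (auto simp: iso_by_def)

lemma iso_by_node: "iso_by f T T' \<Longrightarrow> x \<in> nodes T \<Longrightarrow> f x \<in> nodes T'"
  by (auto simp: iso_by_def bij_betw_def)

lemma iso_by_lab: "iso_by f T T' \<Longrightarrow> x \<in> nodes T \<Longrightarrow> lab T' (f x) = lab T x"
  by (auto simp: iso_by_def)

lemma iso_by_inj_on: "iso_by f T T' \<Longrightarrow> inj_on f (nodes T)"
  by (auto simp: iso_by_def bij_betw_def)

lemma iso_by_alab:
  assumes "iso_by f T T'" "x \<in> nodes T" "y \<in> nodes T"
  shows "alab T' (f x, f y) = alab T (x, y)"
  using assms by (simp add: alab_def iso_by_lab)

lemma iso_by_comp:
  assumes "iso_by f T1 T2" "iso_by g T2 T3"
  shows "iso_by (g \<circ> f) T1 T3"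
proof -
  have "bij_betw (g \<circ> f) (nodes T1) (nodes T3)"
    using assms by (auto simp: iso_by_def intro: bij_betw_trans)
  moreover have "arrs T3 = (\<lambda>(a, b). ((g \<circ> f) a, (g \<circ> f) b)) ` arrs T1"
    using assms unfolding iso_by_def by (auto simp: image_image case_prod_beta)
  moreover have "\<forall>x\<in>nodes T1. lab T3 ((g \<circ> f) x) = lab T1 x"
  proof
    fix x assume x: "x \<in> nodes T1"
    then have "f x \<in> nodes T2" by (rule iso_by_node[OF assms(1)])
    then show "lab T3 ((g \<circ> f) x) = lab T1 x"
      using iso_by_lab[OF assms(1) x] iso_by_lab[OF assms(2)] by simp
  qed
  ultimately show ?thesis by (simp add: iso_by_def)
qed

lemma iso_by_inv:
  assumes "iso_by f T T'" "wf_ptree T"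
  shows "iso_by (inv_into (nodes T) f) T' T"
proof -
  let ?g = "inv_into (nodes T) f"
  have b: "bij_betw f (nodes T) (nodes T')" using assms by (simp add: iso_by_def)
  have bg: "bij_betw ?g (nodes T') (nodes T)" by (rule bij_betw_inv_into[OF b])
  have gf: "\<And>x. x \<in> nodes T \<Longrightarrow> ?g (f x) = x" using b by (simp add: bij_betw_def)
  have A: "arrs T' = (\<lambda>(a, b). (f a, f b)) ` arrs T" using assms by (simp add: iso_by_def)
  have "arrs T = (\<lambda>(a, b). (?g a, ?g b)) ` arrs T'"
  proof -
    have "(\<lambda>(a, b). (?g a, ?g b)) ` arrs T' = (\<lambda>(a, b). (?g (f a), ?g (f b))) ` arrs T"
      unfolding A image_image by (simp add: case_prod_beta)
    also have "\<dots> = id ` arrs T"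
      by (rule image_cong[OF refl]) (use assms(2) gf in \<open>auto simp: wf_ptree_def\<close>)
    also have "\<dots> = arrs T" by simp
    finally show ?thesis by simp
  qed
  moreover have "\<forall>x\<in>nodes T'. lab T (?g x) = lab T' x"
  proof
    fix x assume "x \<in> nodes T'"
    then obtain y where "y \<in> nodes T" "x = f y" using b by (auto simp: bij_betw_def)
    then show "lab T (?g x) = lab T' x" using gf assms(1) by (simp add: iso_by_lab)
  qed
  ultimately show ?thesis using bg by (simp add: iso_by_def)
qed

lemma ptree_iso_trans: "ptree_iso T1 T2 \<Longrightarrow> ptree_iso T2 T3 \<Longrightarrow> ptree_iso T1 T3"
  unfolding ptree_iso_iff using iso_by_comp by blast

lemma ptree_iso_sym: "ptree_iso T T' \<Longrightarrow> wf_ptree T \<Longrightarrow> ptree_iso T' T"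
  unfolding ptree_iso_iff using iso_by_inv by blast

lemma ptree_iso_refl: "ptree_iso T T"
  unfolding ptree_iso_iff using iso_by_id by blast

lemma cls_eq_iff: "wf_ptree T \<Longrightarrow> cls T = cls T' \<longleftrightarrow> ptree_iso T T'"
proof
  assume "cls T = cls T'"
  then show "ptree_iso T T'" using ptree_iso_refl[of T'] by (auto simp: cls_def)
next
  assume a: "ptree_iso T T'" "wf_ptree T"
  then have b: "ptree_iso T' T" by (rule ptree_iso_sym)
  show "cls T = cls T'"
    using a b by (auto simp: cls_def intro: ptree_iso_trans)
qed

lemma ptree_iso_rep_cls: "ptree_iso T (rep (cls T))"
proof -
  have "T \<in> cls T" by (simp add: cls_def ptree_iso_refl)
  then have "rep (cls T) \<in> cls T" unfolding rep_def by (rule someI)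
  then show ?thesis by (simp add: cls_def)
qed

lemma cls_eq_imp_iso_by:
  assumes "wf_ptree A" "cls A = cls B"
  obtains f where "iso_by f A B"
  using assms cls_eq_iff ptree_iso_iff by metis

lemma iso_by_imp_cls_eq:
  assumes "wf_ptree A" "iso_by f A B"
  shows "cls A = cls B"
  using assms cls_eq_iff ptree_iso_iff by metis

lemma wf_ptree_finite_arrs: "wf_ptree T \<Longrightarrow> finite (nodes T) \<Longrightarrow> finite (arrs T)"
  by (rule finite_subset[of _ "nodes T \<times> nodes T"]) (auto simp: wf_ptree_def)

lemma iso_by_cong:
  assumes "iso_by f T T'" "wf_ptree T" "\<forall>x\<in>nodes T. f x = g x"
  shows "iso_by g T T'"
proof -
  have "bij_betw g (nodes T) (nodes T')"
    using assms by (metis bij_betw_cong iso_by_def)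
  moreover have "(\<lambda>(a, b). (f a, f b)) ` arrs T = (\<lambda>(a, b). (g a, g b)) ` arrs T"
    by (rule image_cong[OF refl]) (use assms(2,3) in \<open>auto simp: wf_ptree_def\<close>)
  ultimately show ?thesis using assms by (simp add: iso_by_def)
qed

lemma iso_by_arrsE:
  assumes "iso_by g T T'" "u \<in> arrs T'"
  obtains x z where "(x, z) \<in> arrs T" "u = (g x, g z)"
  using assms by (auto simp: iso_by_def)

lemma iso_by_rtrancl:
  assumes "iso_by f T T'" "(x, y) \<in> (arrs T \<union> (arrs T)\<inverse>)\<^sup>*"
  shows "(f x, f y) \<in> (arrs T' \<union> (arrs T')\<inverse>)\<^sup>*"
  using assms(2)
proof (induction rule: rtrancl_induct)
  case base then show ?case by simp
next
  case (step y z)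
  then have "(f y, f z) \<in> arrs T' \<union> (arrs T')\<inverse>"
    using iso_by_arr[OF assms(1)] by auto
  with step.IH show ?case by (rule rtrancl_into_rtrancl)
qed

lemma iso_by_dtree:
  assumes "iso_by f T T'" "is_dtree T"
  shows "is_dtree T'"
proof -
  have w: "wf_ptree T" using assms(2) by (rule dtree_wf_ptree)
  have b: "bij_betw f (nodes T) (nodes T')" using assms(1) by (simp add: iso_by_def)
  have A: "arrs T' = (\<lambda>(a, b). (f a, f b)) ` arrs T" using assms(1) by (simp add: iso_by_def)
  have inj: "inj_on f (nodes T)" using b by (simp add: bij_betw_def)
  have injA: "inj_on (\<lambda>(a, b). (f a, f b)) (arrs T)"
    using inj w by (auto simp: inj_on_def wf_ptree_def)
  have cA: "card (arrs T') = card (arrs T)" unfolding A using card_image[OF injA] .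
  have cN: "card (nodes T') = card (nodes T)" using bij_betw_same_card[OF b] by simp
  have fin: "finite (nodes T')" using bij_betw_finite[OF b] assms(2) by (auto simp: is_dtree_def)
  have ne: "nodes T' \<noteq> {}" using b assms(2) by (auto simp: is_dtree_def bij_betw_def)
  have sub: "arrs T' \<subseteq> nodes T' \<times> nodes T'" using iso_by_wf_ptree[OF assms(1) w] by (simp add: wf_ptree_def)
  have noloop: "\<forall>x. (x, x) \<notin> arrs T'"
  proof (intro allI notI)
    fix x assume "(x, x) \<in> arrs T'"
    then obtain a c where "(a, c) \<in> arrs T" "f a = x" "f c = x" unfolding A by auto
    moreover then have "a \<in> nodes T" "c \<in> nodes T" using w by (auto simp: wf_ptree_def)
    ultimately have "a = c" using inj by (auto dest: inj_onD)
    then show False using \<open>(a, c) \<in> arrs T\<close> assms(2) by (auto simp: is_dtree_def)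
  qed
  have conn: "\<forall>x\<in>nodes T'. \<forall>y\<in>nodes T'. (x, y) \<in> (arrs T' \<union> (arrs T')\<inverse>)\<^sup>*"
  proof (intro ballI)
    fix x y assume "x \<in> nodes T'" "y \<in> nodes T'"
    then have "x \<in> f ` nodes T" "y \<in> f ` nodes T" using b by (auto simp: bij_betw_def)
    then obtain x0 y0 where "x0 \<in> nodes T" "y0 \<in> nodes T" "x = f x0" "y = f y0"
      by blast
    then show "(x, y) \<in> (arrs T' \<union> (arrs T')\<inverse>)\<^sup>*"
      using iso_by_rtrancl[OF assms(1)] assms(2) by (auto simp: is_dtree_def)
  qed
  show ?thesis using fin ne sub noloop conn cA cN assms(2) by (simp add: is_dtree_def)
qed

lemma iso_by_path:
  assumes "iso_by f T T'" "is_path E T"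
  shows "is_path E T'"
proof -
  have d: "is_dtree T" using assms(2) by (simp add: is_path_def)
  have w: "wf_ptree T" using d by (rule dtree_wf_ptree)
  have A: "arrs T' = (\<lambda>(a, b). (f a, f b)) ` arrs T" using assms(1) by (simp add: iso_by_def)
  have b: "bij_betw f (nodes T) (nodes T')" using assms(1) by (simp add: iso_by_def)
  have l1: "\<forall>x\<in>nodes T'. lab T' x \<in> E"
  proof
    fix x assume "x \<in> nodes T'"
    then obtain y where "y \<in> nodes T" "x = f y" using b by (auto simp: bij_betw_def)
    then show "lab T' x \<in> E" using assms by (simp add: iso_by_lab is_path_def)
  qed
  have l2: "\<forall>e\<in>arrs T'. \<exists>K. snd (lab T' (fst e)) \<inter> fst (lab T' (snd e)) = {K}"
  proof
    fix e assume "e \<in> arrs T'"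
    then obtain x y where xy: "(x, y) \<in> arrs T" "e = (f x, f y)" unfolding A by auto
    then have "x \<in> nodes T" "y \<in> nodes T" using w by (auto simp: wf_ptree_def)
    then show "\<exists>K. snd (lab T' (fst e)) \<inter> fst (lab T' (snd e)) = {K}"
      using xy assms by (auto simp: iso_by_lab is_path_def)
  qed
  have l3: "\<forall>e\<in>arrs T'. \<forall>e'\<in>arrs T'. e \<noteq> e' \<and> (fst e = fst e' \<or> snd e = snd e')
            \<longrightarrow> alab T' e \<noteq> alab T' e'"
  proof (intro ballI impI)
    fix e e' assume "e \<in> arrs T'" "e' \<in> arrs T'" and c: "e \<noteq> e' \<and> (fst e = fst e' \<or> snd e = snd e')"
    then obtain x y x' y' where xy: "(x, y) \<in> arrs T" "e = (f x, f y)" "(x', y') \<in> arrs T" "e' = (f x', f y')"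
      unfolding A by auto
    then have n: "x \<in> nodes T" "y \<in> nodes T" "x' \<in> nodes T" "y' \<in> nodes T" using w by (auto simp: wf_ptree_def)
    have inj: "inj_on f (nodes T)" using b by (simp add: bij_betw_def)
    have "(x, y) \<noteq> (x', y') \<and> (x = x' \<or> y = y')"
      using c xy n inj by (auto dest: inj_onD)
    then have "alab T (x, y) \<noteq> alab T (x', y')"
      using assms(2) xy unfolding is_path_def by (metis fst_conv snd_conv)
    then show "alab T' e \<noteq> alab T' e'" using xy n iso_by_alab[OF assms(1)] by simp
  qed
  show ?thesis using iso_by_dtree[OF assms(1) d] l1 l2 l3 by (simp add: is_path_def)
qed

lemma ptree_iso_path: "ptree_iso T T' \<Longrightarrow> is_path E T \<Longrightarrow> is_path E T'"
  unfolding ptree_iso_iff using iso_by_path by blast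

section \<open>Tree counting\<close>

lemma card_nodes_le_if_connected:
  assumes fV: "finite V" and fA: "finite A" and r: "r \<in> V"
    and conn: "\<forall>x\<in>V. (x, r) \<in> (A \<union> A\<inverse>)\<^sup>*"
  shows "card V \<le> card A + 1"
proof -
  let ?S = "A \<union> A\<inverse>"
  define d where "d x = (LEAST n. (x, r) \<in> ?S ^^ n)" for x
  have dex: "(x, r) \<in> ?S ^^ d x" if "x \<in> V" for x
  proof -
    have "(x, r) \<in> ?S\<^sup>*" using conn that by blast
    then obtain n where "(x, r) \<in> ?S ^^ n" using rtrancl_imp_relpow by blast
    then show ?thesis unfolding d_def by (rule LeastI)
  qed
  have dmin: "d x \<le> n" if "(x, r) \<in> ?S ^^ n" for x n
    unfolding d_def using that by (rule Least_le)
  have step: "\<exists>z. (x, z) \<in> ?S \<and> d z < d x" if "x \<in> V" "x \<noteq> r" for x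
  proof -
    have h: "(x, r) \<in> ?S ^^ d x" using dex that by simp
    have "d x \<noteq> 0"
    proof
      assume "d x = 0"
      then have "x = r" using h by simp
      then show False using that by simp
    qed
    then obtain m where m: "d x = Suc m" by (cases "d x") auto
    then have "(x, r) \<in> ?S ^^ Suc m" using h by simp
    then obtain z where z1: "(x, z) \<in> ?S" and z2: "(z, r) \<in> ?S ^^ m"
      by (blast dest: relpow_Suc_D2)
    have "d z \<le> m" using z2 by (rule dmin)
    then show ?thesis using m z1 by auto
  qed
  define phi where "phi x = (SOME e. e \<in> A \<and> ((fst e = x \<and> d (snd e) < d x) \<or> (snd e = x \<and> d (fst e) < d x)))" for x
  have phi: "phi x \<in> A \<and> ((fst (phi x) = x \<and> d (snd (phi x)) < d x) \<or> (snd (phi x) = x \<and> d (fst (phi x)) < d x))"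
    if xV: "x \<in> V" and xr: "x \<noteq> r" for x
  proof -
    obtain z where z: "(x, z) \<in> ?S" "d z < d x" using step[OF xV xr] by blast
    have "\<exists>e. e \<in> A \<and> ((fst e = x \<and> d (snd e) < d x) \<or> (snd e = x \<and> d (fst e) < d x))"
    proof (cases "(x, z) \<in> A")
      case True
      then show ?thesis using z(2) by (intro exI[where x="(x, z)"]) simp
    next
      case False
      then have "(z, x) \<in> A" using z(1) by blast
      then show ?thesis using z(2) by (intro exI[where x="(z, x)"]) simp
    qed
    then show ?thesis unfolding phi_def by (rule someI_ex)
  qed
  have inj: "inj_on phi (V - {r})"
  proof (rule inj_onI)
    fix x y assume xy: "x \<in> V - {r}" "y \<in> V - {r}" "phi x = phi y"
    have px: "(fst (phi x) = x \<and> d (snd (phi x)) < d x) \<or> (snd (phi x) = x \<and> d (fst (phi x)) < d x)"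
      using phi[of x] xy by blast
    have py: "(fst (phi y) = y \<and> d (snd (phi y)) < d y) \<or> (snd (phi y) = y \<and> d (fst (phi y)) < d y)"
      using phi[of y] xy by blast
    obtain u w where uw: "phi x = (u, w)" by fastforce
    then have uw2: "phi y = (u, w)" using xy(3) by simp
    have px': "(u = x \<and> d w < d x) \<or> (w = x \<and> d u < d x)" using px uw by simp
    have py': "(u = y \<and> d w < d y) \<or> (w = y \<and> d u < d y)" using py uw2 by simp
    show "x = y"
      using px' py' by (elim disjE conjE) auto
  qed
  have "phi ` (V - {r}) \<subseteq> A" by (intro image_subsetI) (use phi in blast)
  then have "card (V - {r}) \<le> card A" using card_inj_on_le[OF inj _ fA] by simp
  moreover have "card V = card (V - {r}) + 1" using fV r
    by (metis Suc_eq_plus1 card_Suc_Diff1)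
  ultimately show ?thesis by simp
qed

lemma dtree_no_2cycle:
  assumes "is_dtree T" "(a, b) \<in> arrs T"
  shows "(b, a) \<notin> arrs T"
proof
  assume ba: "(b, a) \<in> arrs T"
  let ?A = "arrs T - {(b, a)}"
  have ab: "(a, b) \<noteq> (b, a)" using assms by (auto simp: is_dtree_def)
  have fN: "finite (nodes T)" using assms by (simp add: is_dtree_def)
  have "arrs T \<subseteq> nodes T \<times> nodes T" using assms by (simp add: is_dtree_def)
  then have fA: "finite (arrs T)" using fN by (meson finite_SigmaI finite_subset)
  have S: "?A \<union> ?A\<inverse> = arrs T \<union> (arrs T)\<inverse>" using ab ba assms(2) by auto
  obtain r where r: "r \<in> nodes T" using assms by (auto simp: is_dtree_def)
  have fA': "finite ?A" using fA by simp
  have conn: "\<forall>x\<in>nodes T. \<forall>y\<in>nodes T. (x, y) \<in> (arrs T \<union> (arrs T)\<inverse>)\<^sup>*"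
    using assms(1) by (simp add: is_dtree_def)
  have c: "\<forall>x\<in>nodes T. (x, r) \<in> (?A \<union> ?A\<inverse>)\<^sup>*"
    unfolding S
  proof
    fix x assume "x \<in> nodes T"
    then show "(x, r) \<in> (arrs T \<union> (arrs T)\<inverse>)\<^sup>*" using conn r by (meson bspec)
  qed
  have "card (nodes T) \<le> card ?A + 1"
    by (rule card_nodes_le_if_connected[OF fN fA' r c])
  moreover have "card ?A + 1 = card (arrs T)" using ba fA
    by (metis Suc_eq_plus1 card_Suc_Diff1)
  ultimately show False using assms by (simp add: is_dtree_def)
qed

section \<open>Elementary properties of paths\<close>

context
  fixes E :: "'v hedge set" and T :: "'v ptree"
  assumes P: "is_path E T"
begin

lemma path_arr_nodes: "(x, y) \<in> arrs T \<Longrightarrow> x \<in> nodes T \<and> y \<in> nodes T"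
  using P by (auto simp: is_path_def is_dtree_def)

lemma path_no_loop: "(x, x) \<notin> arrs T"
  using P by (simp add: is_path_def is_dtree_def)

lemma path_arr_ends: "(a, b) \<in> arrs T \<Longrightarrow> a \<in> nodes T \<and> b \<in> nodes T \<and> a \<noteq> b"
  using path_arr_nodes path_no_loop by blast

lemma path_no_2cycle: "(a, b) \<in> arrs T \<Longrightarrow> (b, a) \<notin> arrs T"
  using dtree_no_2cycle P by (auto simp: is_path_def)

lemma path_lab_in: "x \<in> nodes T \<Longrightarrow> lab T x \<in> E"
  using P by (simp add: is_path_def)

lemma path_arr_meet: "(x, y) \<in> arrs T \<Longrightarrow> snd (lab T x) \<inter> fst (lab T y) = {alab T (x, y)}"
  using P unfolding is_path_def alab_def by fastforce

lemma path_alab_out_distinct: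
  "(x, y) \<in> arrs T \<Longrightarrow> (x, y') \<in> arrs T \<Longrightarrow> y \<noteq> y' \<Longrightarrow> alab T (x, y) \<noteq> alab T (x, y')"
  using P unfolding is_path_def by fastforce

lemma path_alab_in_distinct:
  "(x, y) \<in> arrs T \<Longrightarrow> (x', y) \<in> arrs T \<Longrightarrow> x \<noteq> x' \<Longrightarrow> alab T (x, y) \<noteq> alab T (x', y)"
  using P unfolding is_path_def by fastforce

end

section \<open>Paths have no non-trivial automorphisms\<close>

lemma funpow_mult_fixed: "(g ^^ m) x = x \<Longrightarrow> (g ^^ (m * k)) x = x"
  by (induction k) (simp_all add: funpow_add)

lemma funpow_mod_fixed:
  assumes "(g ^^ p) x = x"
  shows "(g ^^ (n mod p)) x = (g ^^ n) x"
proof -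
  have "(g ^^ n) x = (g ^^ (n mod p)) ((g ^^ (p * (n div p))) x)"
    by (metis comp_apply funpow_add mod_div_mult_eq mult.commute)
  then show ?thesis using funpow_mult_fixed[OF assms] by simp
qed

lemma funpow_fixed_gcd:
  assumes "(g ^^ m) x = x" "(g ^^ n) x = x"
  shows "(g ^^ gcd m n) x = x"
  using assms
proof (induction m n rule: gcd_nat_induct)
  case (step m n)
  then show ?case by (simp add: gcd_non_0_nat funpow_mod_fixed)
qed simp

context
  fixes X :: "'a set" and g :: "'a \<Rightarrow> 'a" and p :: nat
  assumes maps: "\<And>x. x \<in> X \<Longrightarrow> g x \<in> X"
    and period: "\<And>x. x \<in> X \<Longrightarrow> (g ^^ p) x = x"
    and fixpoint_free: "\<And>x. x \<in> X \<Longrightarrow> g x \<noteq> x"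
    and prime: "prime p"
begin

lemma funpow_in: "x \<in> X \<Longrightarrow> (g ^^ n) x \<in> X"
  by (induction n) (auto intro: maps)

lemma inj_on_orbit:
  assumes x: "x \<in> X"
  shows "inj_on (\<lambda>i. (g ^^ i) x) {..<p}"
proof -
  have no_return: False if ij: "i < j" "j < p" "(g ^^ i) x = (g ^^ j) x" for i j
  proof -
    let ?y = "(g ^^ i) x"
    have y: "?y \<in> X" using funpow_in[OF x] .
    have "(g ^^ (j - i)) ?y = (g ^^ j) x"
      using ij(1) by (metis comp_apply funpow_add le_add_diff_inverse2 less_imp_le)
    then have "(g ^^ gcd (j - i) p) ?y = ?y"
      using ij(3) period[OF y] by (intro funpow_fixed_gcd) simp_all
    moreover have "\<not> p dvd (j - i)" using ij by (auto dest: dvd_imp_le)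
    then have "gcd (j - i) p = 1"
      using prime_imp_coprime[OF prime] by (metis coprime_iff_gcd_eq_1 gcd.commute)
    ultimately show False using fixpoint_free[OF y] by simp
  qed
  show ?thesis
  proof (rule inj_onI)
    fix i j assume "i \<in> {..<p}" "j \<in> {..<p}" "(g ^^ i) x = (g ^^ j) x"
    then show "i = j"
      by (cases i j rule: linorder_cases) (auto intro: no_return no_return[OF _ _ sym])
  qed
qed

lemma card_orbit:
  assumes "x \<in> X"
  shows "card (range (\<lambda>n. (g ^^ n) x)) = p"
proof -
  have "(g ^^ n) x \<in> (\<lambda>i. (g ^^ i) x) ` {..<p}" for n
    using funpow_mod_fixed[OF period[OF assms], of n] prime_gt_0_nat[OF prime]
    by (intro image_eqI[of _ _ "n mod p"]) auto
  then have "range (\<lambda>n. (g ^^ n) x) = (\<lambda>i. (g ^^ i) x) ` {..<p}" by auto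
  then show ?thesis by (simp add: card_image inj_on_orbit[OF assms])
qed

end

text \<open>The orbits of a fixpoint-free map of prime order all have exactly that prime size.\<close>

lemma prime_dvd_card_fixpoint_free:
  assumes "finite X" "\<And>x. x \<in> X \<Longrightarrow> g x \<in> X" "\<And>x. x \<in> X \<Longrightarrow> (g ^^ p) x = x"
    "\<And>x. x \<in> X \<Longrightarrow> g x \<noteq> x" "prime p"
  shows "p dvd card X"
  using assms
proof (induction "card X" arbitrary: X rule: less_induct)
  case less
  show ?case
  proof (cases "X = {}")
    case False
    then obtain x where x: "x \<in> X" by blast
    let ?O = "range (\<lambda>n. (g ^^ n) x)"
    have OX: "?O \<subseteq> X" using funpow_in[OF less.prems(2-5)] x by blast
    have cO: "card ?O = p" using card_orbit[OF less.prems(2-5) x] .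
    have "g z \<in> X - ?O" if z: "z \<in> X - ?O" for z
    proof -
      obtain q where q: "p = Suc q" using prime_gt_0_nat[OF less.prems(5)] not0_implies_Suc by blast
      have "z = (g ^^ q) (g z)" using less.prems(3) z by (simp add: q funpow_swap1)
      moreover have "(g ^^ q) ((g ^^ n) x) \<in> ?O" for n
        by (metis comp_apply funpow_add rangeI)
      ultimately have "g z \<notin> ?O" using z by auto
      then show ?thesis using z less.prems(2) by blast
    qed
    then have "p dvd card (X - ?O)"
      using less.prems finite_subset[OF OX] cO card_Diff_subset[OF _ OX] card_mono[OF _ OX]
        prime_gt_0_nat[OF less.prems(5)]
      by (intro less.hyps) auto
    moreover have "card X = card (X - ?O) + p"
      using less.prems(1) OX cO card_Diff_subset[OF _ OX] card_mono[OF _ OX] finite_subset[OF OX]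
      by simp
    ultimately show ?thesis by simp
  qed simp
qed

lemma iso_by_eq_if_eq_at:
  assumes P: "is_path E T'" and f: "iso_by f T T'" and f': "iso_by f' T T'"
    and d: "is_dtree T" and x0: "x0 \<in> nodes T" "f x0 = f' x0"
  shows "\<forall>x\<in>nodes T. f x = f' x"
proof -
  have w: "wf_ptree T" using d by (rule dtree_wf_ptree)
  have next_node: "f w = f' w" if u: "u \<in> nodes T" "f u = f' u" and uw: "(u, w) \<in> arrs T \<or> (w, u) \<in> arrs T"
    for u w
  proof -
    have wn: "w \<in> nodes T" using uw w by (auto simp: wf_ptree_def)
    show ?thesis
    proof (cases "(u, w) \<in> arrs T")
      case True
      have "alab T' (f u, f w) = alab T' (f u, f' w)"
        using iso_by_alab[OF f u(1) wn] iso_by_alab[OF f' u(1) wn] u(2) by simp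
      then show ?thesis using path_alab_out_distinct[OF P] iso_by_arr[OF f True] iso_by_arr[OF f' True] u(2)
        by fastforce
    next
      case False
      then have wu: "(w, u) \<in> arrs T" using uw by blast
      have "alab T' (f w, f u) = alab T' (f' w, f u)"
        using iso_by_alab[OF f wn u(1)] iso_by_alab[OF f' wn u(1)] u(2) by simp
      then show ?thesis using path_alab_in_distinct[OF P] iso_by_arr[OF f wu] iso_by_arr[OF f' wu] u(2)
        by fastforce
    qed
  qed
  show ?thesis
  proof
    fix x assume x: "x \<in> nodes T"
    have "(x0, x) \<in> (arrs T \<union> (arrs T)\<inverse>)\<^sup>*" using d x x0(1) by (simp add: is_dtree_def)
    then have "x \<in> nodes T \<and> f x = f' x"
    proof (induction rule: rtrancl_induct)
      case (step y z)
      then have "(y, z) \<in> arrs T \<or> (z, y) \<in> arrs T" by blast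
      then show ?case using step.IH next_node w by (auto simp: wf_ptree_def)
    qed (use x0 in simp)
    then show "f x = f' x" by simp
  qed
qed

lemma funpow_map_prod:
  fixes g :: "'a \<Rightarrow> 'a"
  shows "((\<lambda>(a, b). (g a, g b)) ^^ n) e = ((g ^^ n) (fst e), (g ^^ n) (snd e))"
  by (induction n) (simp_all add: case_prod_beta)

lemma iso_by_funpow:
  assumes "iso_by k T T"
  shows "iso_by (k ^^ n) T T"
proof (induction n)
  case (Suc n)
  then show ?case using iso_by_comp[OF Suc assms] by (simp add: comp_def)
qed (simp add: iso_by_id[unfolded id_def])

text \<open>An automorphism of prime order without fixed nodes would have all its node orbits and
  arrow orbits of that prime size, contradicting card nodes = card arrows + 1.\<close>

lemma path_automorphism_prime_order:
  assumes P: "is_path E T" and g: "iso_by g T T" and p: "prime p"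
    and gp: "\<forall>x\<in>nodes T. (g ^^ p) x = x"
  shows "\<forall>x\<in>nodes T. g x = x"
proof (rule ccontr)
  assume "\<not> (\<forall>x\<in>nodes T. g x = x)"
  then obtain x1 where x1: "x1 \<in> nodes T" "g x1 \<noteq> x1" by blast
  have d: "is_dtree T" using P by (rule path_is_dtree)
  have w: "wf_ptree T" using d by (rule dtree_wf_ptree)
  have fN: "finite (nodes T)" using d by (simp add: is_dtree_def)
  have nofix: "g x \<noteq> x" if "x \<in> nodes T" for x
    using iso_by_eq_if_eq_at[OF P g iso_by_id d that] x1 by auto
  have "p dvd card (nodes T)"
    using fN iso_by_node[OF g] gp nofix p by (intro prime_dvd_card_fixpoint_free[where g = g]) auto
  moreover have "p dvd card (arrs T)"
  proof (rule prime_dvd_card_fixpoint_free[where g = "\<lambda>(a, b). (g a, g b)"])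
    show "finite (arrs T)" using w fN by (rule wf_ptree_finite_arrs)
    show "(\<lambda>(a, b). (g a, g b)) e \<in> arrs T" if "e \<in> arrs T" for e
      using iso_by_arr[OF g] that by (cases e) auto
    show "((\<lambda>(a, b). (g a, g b)) ^^ p) e = e" if "e \<in> arrs T" for e
      using that w gp by (auto simp: funpow_map_prod wf_ptree_def)
    show "(\<lambda>(a, b). (g a, g b)) e \<noteq> e" if "e \<in> arrs T" for e
      using that w nofix by (auto simp: wf_ptree_def)
  qed (fact p)
  moreover have "card (nodes T) = card (arrs T) + 1" using d by (simp add: is_dtree_def)
  ultimately have "p dvd 1" by (metis dvd_add_right_iff)
  then show False using p by simp
qed

lemma path_automorphism_finite_order:
  assumes P: "is_path E T" and k: "iso_by k T T" and n: "0 < n" "\<forall>x\<in>nodes T. (k ^^ n) x = x"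
  shows "\<forall>x\<in>nodes T. k x = x"
  using n
proof (induction n rule: less_induct)
  case (less n)
  show ?case
  proof (cases "n = 1")
    case False
    then obtain p where p: "prime p" "p dvd n" using prime_factor_nat by blast
    then obtain q where q: "n = q * p" by (metis dvd_mult_div_cancel mult.commute)
    have "0 < q" "q < n" using less.prems(1) q prime_gt_1_nat[OF p(1)] by auto
    moreover have "\<forall>x\<in>nodes T. (k ^^ q) x = x"
      using path_automorphism_prime_order[OF P iso_by_funpow[OF k] p(1)] less.prems(2) q
      by (simp add: funpow_mult)
    ultimately show ?thesis using less.IH by blast
  qed (use less.prems in simp)
qed

lemma path_automorphism_id:
  assumes P: "is_path E T" and k: "iso_by k T T"
  shows "\<forall>x\<in>nodes T. k x = x"
proof -
  have d: "is_dtree T" using P by (rule path_is_dtree)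
  define k' where "k' x = (if x \<in> nodes T then k x else x)" for x
  have k': "iso_by k' T T" using iso_by_cong[OF k dtree_wf_ptree[OF d]] by (simp add: k'_def)
  have "k' permutes (nodes T)"
    using k' by (intro bij_imp_permutes) (auto simp: k'_def iso_by_def)
  then have "permutation k'" using d permutation_permutes by (auto simp: is_dtree_def)
  then obtain n where "0 < n" "k' ^^ n = id" using permutation_is_nilpotent by metis
  then have "\<forall>x\<in>nodes T. k' x = x" using path_automorphism_finite_order[OF P k'] by simp
  then show ?thesis by (simp add: k'_def)
qed

lemma path_iso_unique:
  assumes P: "is_path E T" and f: "iso_by f T T'" and f': "iso_by f' T T'"
  shows "\<forall>x\<in>nodes T. f x = f' x"
proof
  fix x assume x: "x \<in> nodes T"
  let ?g = "inv_into (nodes T) f'"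
  have "iso_by (?g \<circ> f) T T"
    using iso_by_comp[OF f iso_by_inv[OF f']] P by (simp add: is_path_def dtree_wf_ptree)
  then have "?g (f x) = x" using path_automorphism_id[OF P] x by fastforce
  then have "f' (?g (f x)) = f' x" by simp
  moreover have "f x \<in> f' ` nodes T"
    using iso_by_node[OF f x] f' by (simp add: iso_by_def bij_betw_def)
  ultimately show "f x = f' x" by (simp add: f_inv_into_f)
qed

section \<open>Gluing an arrow of a path yields a path\<close>

definition hmerge :: "'v hedge \<Rightarrow> 'v hedge \<Rightarrow> 'v \<Rightarrow> 'v hedge" where
  "hmerge e1 e2 K = (fst e1 \<union> (fst e2 - {K}), (snd e1 - {K}) \<union> snd e2)"

lemma higraph_meet_eq:
  assumes H: "is_higraph E" and "x \<in> E" "y \<in> E" "L \<in> snd x \<inter> fst y"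
  shows "snd x \<inter> fst y = {L}"
proof -
  have "snd x \<inter> fst y \<noteq> {}" using assms(4) by blast
  then obtain K where "snd x \<inter> fst y = {K}"
    using H assms(2,3) unfolding is_higraph_def by blast
  then show ?thesis using assms(4) by auto
qed

lemma higraph_merge:
  assumes H: "is_higraph E" and "x \<in> E" "y \<in> E" "snd x \<inter> fst y = {K}"
  shows "fst x \<inter> (fst y - {K}) = {} \<and> (snd x - {K}) \<inter> snd y = {} \<and> hmerge x y K \<in> E"
proof -
  have "snd x \<inter> fst y \<noteq> {}" using assms(4) by blast
  then obtain K' where K': "snd x \<inter> fst y = {K'}"
           "fst x \<inter> (fst y - {K'}) = {}"
           "(snd x - {K'}) \<inter> snd y = {}"
           "(fst x \<union> (fst y - {K'}), (snd x - {K'}) \<union> snd y) \<in> E"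
    using H assms(2,3) unfolding is_higraph_def by blast
  then show ?thesis using assms(4) by (simp add: hmerge_def)
qed

lemma glue_nodes: "nodes (glue T (a, b)) = nodes T - {b}"
  by (simp add: glue_def Let_def)

lemma glue_arrs:
  "arrs (glue T (a, b)) = (\<lambda>(x, y). (if x = b then a else x, if y = b then a else y)) ` (arrs T - {(a, b)})"
  by (simp add: glue_def Let_def)

lemma glue_lab:
  "lab (glue T (a, b)) z = (if z = a then hmerge (lab T a) (lab T b) (alab T (a, b)) else lab T z)"
  by (simp add: glue_def Let_def hmerge_def)

context
  fixes E :: "'v hedge set" and T :: "'v ptree" and a b :: nat
  assumes H: "is_higraph E" and P: "is_path E T" and e: "(a, b) \<in> arrs T"
begin

private abbreviation "s x \<equiv> fst (lab T x)"
private abbreviation "t x \<equiv> snd (lab T x)"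
private abbreviation "K \<equiv> alab T (a, b)"
private abbreviation "ren z \<equiv> (if z = b then a else z)"

private lemma ab_nodes: "a \<in> nodes T" "b \<in> nodes T" "a \<noteq> b"
  using path_arr_ends[OF P e] by auto

private lemma ba_not_arr: "(b, a) \<notin> arrs T"
  using path_no_2cycle[OF P e] .

private lemma K_meet: "t a \<inter> s b = {K}"
  using path_arr_meet[OF P e] .

private lemma merge_facts:
  "s a \<inter> (s b - {K}) = {} \<and> (t a - {K}) \<inter> t b = {} \<and> hmerge (lab T a) (lab T b) K \<in> E"
  using higraph_merge[OF H path_lab_in[OF P ab_nodes(1)] path_lab_in[OF P ab_nodes(2)] K_meet] .

lemma arr_sources_disjoint: "s a \<inter> (s b - {K}) = {}"
  using merge_facts by blast

lemma arr_targets_disjoint: "(t a - {K}) \<inter> t b = {}"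
  using merge_facts by blast

lemma arr_merge_in: "hmerge (lab T a) (lab T b) K \<in> E"
  using merge_facts by blast

lemma glue_arrsE:
  assumes "u \<in> arrs (glue T (a, b))"
  obtains x y where "(x, y) \<in> arrs T" "(x, y) \<noteq> (a, b)" "u = (ren x, ren y)"
  using assms unfolding glue_arrs by auto

lemma glue_arrI:
  assumes "(x, y) \<in> arrs T" "(x, y) \<noteq> (a, b)"
  shows "(ren x, ren y) \<in> arrs (glue T (a, b))"
  unfolding glue_arrs by (rule rev_image_eqI[where x="(x, y)"]) (use assms in auto)

lemma glue_lab_in: "z \<in> nodes (glue T (a, b)) \<Longrightarrow> lab (glue T (a, b)) z \<in> E"
  using arr_merge_in path_lab_in[OF P] by (simp add: glue_lab glue_nodes)

lemma glue_arr_meet: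
  assumes xy: "(x, y) \<in> arrs T" "(x, y) \<noteq> (a, b)"
  shows "snd (lab (glue T (a, b)) (ren x)) \<inter> fst (lab (glue T (a, b)) (ren y)) = {alab T (x, y)}"
proof -
  let ?G = "glue T (a, b)"
  let ?L = "alab T (x, y)"
  have xyn: "x \<in> nodes T" "y \<in> nodes T" using path_arr_nodes[OF P xy(1)] by auto
  have xy_ne: "x \<noteq> y" using xy(1) path_no_loop[OF P] by auto
  have Lin: "?L \<in> t x \<inter> s y" using path_arr_meet[OF P xy(1)] by auto
  have ren_nodes: "ren x \<in> nodes ?G" "ren y \<in> nodes ?G" using xyn ab_nodes by (auto simp: glue_nodes)
  have E1: "lab ?G (ren x) \<in> E" "lab ?G (ren y) \<in> E" using glue_lab_in[OF ren_nodes(1)] glue_lab_in[OF ren_nodes(2)] by auto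
  have mm: "hmerge (lab T a) (lab T b) K = (s a \<union> (s b - {K}), (t a - {K}) \<union> t b)"
    by (simp add: hmerge_def)
  have "?L \<in> snd (lab ?G (ren x)) \<inter> fst (lab ?G (ren y))"
  proof (cases "x = a \<or> x = b \<or> y = a \<or> y = b")
    case False
    then show ?thesis using Lin by (simp add: glue_lab)
  next
    case True
    then consider "x = a" | "x = b" | "y = a" | "y = b" by blast
    then show ?thesis
    proof cases
      case 1
      then have yb: "y \<noteq> b" using xy by auto
      have "y \<noteq> a" using 1 xy_ne by simp
      moreover have "?L \<noteq> K" using path_alab_out_distinct[OF P, of a y b] xy(1) e yb 1 by simp
      ultimately show ?thesis using Lin 1 yb by (simp add: glue_lab mm)
    next
      case 2
      have "y \<noteq> a" using 2 xy(1) ba_not_arr by auto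
      moreover have "y \<noteq> b" using 2 xy_ne by simp
      ultimately show ?thesis using Lin 2 ab_nodes(3) by (simp add: glue_lab mm)
    next
      case 3
      have "x \<noteq> b" using 3 xy(1) ba_not_arr by auto
      moreover have "x \<noteq> a" using 3 xy_ne by simp
      ultimately show ?thesis using Lin 3 ab_nodes(3) by (simp add: glue_lab mm)
    next
      case 4
      have xa: "x \<noteq> a" using 4 xy by auto
      have "x \<noteq> b" using 4 xy_ne by simp
      moreover have "?L \<noteq> K" using path_alab_in_distinct[OF P, of x b a] xy(1) e xa 4 by simp
      ultimately show ?thesis using Lin 4 xa ab_nodes(3) by (simp add: glue_lab mm)
    qed
  qed
  then show ?thesis using higraph_meet_eq[OF H E1] by blast
qed

lemma glue_alab:
  assumes xy: "(x, y) \<in> arrs T" "(x, y) \<noteq> (a, b)"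
  shows "alab (glue T (a, b)) (ren x, ren y) = alab T (x, y)"
  using glue_arr_meet[OF xy] by (simp add: alab_def)

private lemma no_common_head:
  assumes "(a, y) \<in> arrs T" "(b, y) \<in> arrs T"
  shows False
proof -
  have ya: "y \<noteq> a" using assms(2) ba_not_arr by auto
  have yb: "y \<noteq> b" using assms(1) e path_no_loop[OF P] assms(2) by auto
  let ?M = "alab T (a, y)" and ?N = "alab T (b, y)"
  have M: "?M \<in> t a \<inter> s y" using path_arr_meet[OF P assms(1)] by auto
  have N: "?N \<in> t b \<inter> s y" using path_arr_meet[OF P assms(2)] by auto
  have MK: "?M \<noteq> K" using path_alab_out_distinct[OF P assms(1) e yb] .
  have MN: "?M \<noteq> ?N"
  proof
    assume "?M = ?N"
    then have "?M \<in> (t a - {K}) \<inter> t b" using M N MK by auto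
    then show False using arr_targets_disjoint by simp
  qed
  let ?m = "hmerge (lab T a) (lab T b) K"
  have mE: "?m \<in> E" using arr_merge_in by blast
  have yE: "lab T y \<in> E" using path_lab_in[OF P] path_arr_nodes[OF P assms(1)] by blast
  have "?M \<in> snd ?m \<inter> s y" "?N \<in> snd ?m \<inter> s y" using M N MK by (auto simp: hmerge_def)
  then have "snd ?m \<inter> s y = {?M}" "snd ?m \<inter> s y = {?N}"
    using higraph_meet_eq[OF H mE yE] by blast+
  then show False using MN by simp
qed

private lemma no_common_tail:
  assumes "(x, a) \<in> arrs T" "(x, b) \<in> arrs T"
  shows False
proof -
  have xa: "x \<noteq> a" using assms(1) path_no_loop[OF P] by auto
  have xb: "x \<noteq> b" using assms(1) ba_not_arr by auto
  let ?L = "alab T (x, a)" and ?L' = "alab T (x, b)"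
  have L: "?L \<in> t x \<inter> s a" using path_arr_meet[OF P assms(1)] by auto
  have L': "?L' \<in> t x \<inter> s b" using path_arr_meet[OF P assms(2)] by auto
  have LL: "?L \<noteq> ?L'" using path_alab_out_distinct[OF P assms(1) assms(2) ab_nodes(3)] .
  have xE: "lab T x \<in> E" using path_lab_in[OF P] path_arr_nodes[OF P assms(1)] by blast
  have aE: "lab T a \<in> E" using path_lab_in[OF P] ab_nodes by blast
  show False
  proof (cases "?L' = K")
    case True
    have "t x \<inter> s a = {?L}" using path_arr_meet[OF P assms(1)] .
    then have "(t x - {?L}) \<inter> t a = {}" using higraph_merge[OF H xE aE] by blast
    moreover have "K \<in> t x - {?L}" using L' True LL by auto
    moreover have "K \<in> t a" using K_meet by blast
    ultimately show False by blast
  next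
    case False
    let ?m = "hmerge (lab T a) (lab T b) K"
    have mE: "?m \<in> E" using arr_merge_in by blast
    have "?L \<in> t x \<inter> fst ?m" "?L' \<in> t x \<inter> fst ?m" using L L' False by (auto simp: hmerge_def)
    then have "t x \<inter> fst ?m = {?L}" "t x \<inter> fst ?m = {?L'}"
      using higraph_meet_eq[OF H xE mE] by blast+
    then show False using LL by simp
  qed
qed

lemma inj_on_glue_rename: "inj_on (\<lambda>(x, y). (ren x, ren y)) (arrs T - {(a, b)})"
proof (rule inj_onI)
  fix u v assume u: "u \<in> arrs T - {(a, b)}" and v: "v \<in> arrs T - {(a, b)}"
    and eq: "(\<lambda>(x, y). (ren x, ren y)) u = (\<lambda>(x, y). (ren x, ren y)) v"
  obtain x y where u': "u = (x, y)" by fastforce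
  obtain x' y' where v': "v = (x', y')" by fastforce
  have xy: "(x, y) \<in> arrs T" "(x, y) \<noteq> (a, b)" using u u' by auto
  have xy': "(x', y') \<in> arrs T" "(x', y') \<noteq> (a, b)" using v v' by auto
  have rx: "ren x = ren x'" and ry: "ren y = ren y'" using eq u' v' by auto
  have nl: "x \<noteq> y" "x' \<noteq> y'" using xy(1) xy'(1) path_no_loop[OF P] by auto
  have ba: "(b, a) \<notin> arrs T" by (rule ba_not_arr)
  have cx: "x = x' \<or> (x = a \<and> x' = b) \<or> (x = b \<and> x' = a)" using rx by (auto split: if_splits)
  have cy: "y = y' \<or> (y = a \<and> y' = b) \<or> (y = b \<and> y' = a)" using ry by (auto split: if_splits)
  have "x = x' \<and> y = y'"
  proof -
    { assume "x \<noteq> x'"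
      then have xx: "(x = a \<and> x' = b) \<or> (x = b \<and> x' = a)" using cx by blast
      have False
      proof (cases "y = y'")
        case True
        then have "y \<noteq> a \<and> y \<noteq> b" using xx xy xy' nl ba by auto
        then show False using xx True xy(1) xy'(1) no_common_head by blast
      next
        case False
        then have "(y = a \<and> y' = b) \<or> (y = b \<and> y' = a)" using cy by blast
        then show False using xx xy xy' nl ba by auto
      qed }
    moreover
    { assume xx: "x = x'" "y \<noteq> y'"
      then have yy: "(y = a \<and> y' = b) \<or> (y = b \<and> y' = a)" using cy by blast
      then have "x \<noteq> a \<and> x \<noteq> b" using xx xy xy' nl ba by auto
      then have False using yy xx xy(1) xy'(1) no_common_tail by blast }
    ultimately show ?thesis by blast
  qed
  then show "u = v" using u' v' by simp
qed

lemma glue_rename_no_loop: "(x, y) \<in> arrs T - {(a, b)} \<Longrightarrow> ren x \<noteq> ren y"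
  using path_no_loop[OF P] ba_not_arr by (auto split: if_splits)

lemma glue_rtrancl:
  assumes "(x, y) \<in> (arrs T \<union> (arrs T)\<inverse>)\<^sup>*"
  shows "(ren x, ren y) \<in> (arrs (glue T (a, b)) \<union> (arrs (glue T (a, b)))\<inverse>)\<^sup>*"
  using assms
proof (induction rule: rtrancl_induct)
  case base then show ?case by simp
next
  case (step y z)
  let ?S = "arrs (glue T (a, b)) \<union> (arrs (glue T (a, b)))\<inverse>"
  have "(ren y, ren z) \<in> ?S\<^sup>*"
  proof (cases "(y, z) = (a, b) \<or> (z, y) = (a, b)")
    case True
    then have "ren y = ren z" by auto
    then show ?thesis by simp
  next
    case False
    then have "(y, z) \<in> arrs T - {(a, b)} \<or> (z, y) \<in> arrs T - {(a, b)}" using step(2) by blast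
    then have "(ren y, ren z) \<in> arrs (glue T (a, b)) \<or> (ren z, ren y) \<in> arrs (glue T (a, b))"
      using glue_arrI by blast
    then have "(ren y, ren z) \<in> ?S" by blast
    then show ?thesis by blast
  qed
  with step.IH show ?case by (rule rtrancl_trans)
qed

lemma glue_dtree: "is_dtree (glue T (a, b))"
proof -
  let ?G = "glue T (a, b)"
  have fN: "finite (nodes T)" using path_is_dtree[OF P] by (simp add: is_dtree_def)
  have fA: "finite (arrs T)" using wf_ptree_finite_arrs[OF dtree_wf_ptree[OF path_is_dtree[OF P]] fN] .
  have f1: "finite (nodes ?G)" using fN by (simp add: glue_nodes)
  have n1: "nodes ?G \<noteq> {}" using ab_nodes by (auto simp: glue_nodes)
  have s1: "arrs ?G \<subseteq> nodes ?G \<times> nodes ?G"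
  proof
    fix u assume "u \<in> arrs ?G"
    then obtain x y where xy: "(x, y) \<in> arrs T" "u = (ren x, ren y)" by (rule glue_arrsE)
    then show "u \<in> nodes ?G \<times> nodes ?G" using path_arr_nodes[OF P xy(1)] ab_nodes by (auto simp: glue_nodes)
  qed
  have l1: "\<forall>x. (x, x) \<notin> arrs ?G"
  proof (intro allI notI)
    fix x assume "(x, x) \<in> arrs ?G"
    then obtain u v where uv: "(u, v) \<in> arrs T" "(u, v) \<noteq> (a, b)" "(x, x) = (ren u, ren v)" by (rule glue_arrsE)
    then show False using glue_rename_no_loop[of u v] by simp
  qed
  have c1: "\<forall>x\<in>nodes ?G. \<forall>y\<in>nodes ?G. (x, y) \<in> (arrs ?G \<union> (arrs ?G)\<inverse>)\<^sup>*"
  proof (intro ballI)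
    fix x y assume "x \<in> nodes ?G" "y \<in> nodes ?G"
    then have xy: "x \<in> nodes T" "y \<in> nodes T" "x \<noteq> b" "y \<noteq> b" by (auto simp: glue_nodes)
    have "(x, y) \<in> (arrs T \<union> (arrs T)\<inverse>)\<^sup>*" using path_is_dtree[OF P] xy unfolding is_dtree_def by blast
    then have "(ren x, ren y) \<in> (arrs ?G \<union> (arrs ?G)\<inverse>)\<^sup>*" by (rule glue_rtrancl)
    then show "(x, y) \<in> (arrs ?G \<union> (arrs ?G)\<inverse>)\<^sup>*" using xy by simp
  qed
  have "card (arrs ?G) = card (arrs T - {(a, b)})"
    unfolding glue_arrs using card_image[OF inj_on_glue_rename] .
  also have "\<dots> = card (arrs T) - 1" using e fA by simp
  finally have cA: "card (arrs ?G) = card (arrs T) - 1" .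
  have cN: "card (nodes ?G) = card (nodes T) - 1" using ab_nodes fN by (simp add: glue_nodes)
  have cT: "card (arrs T) + 1 = card (nodes T)" using path_is_dtree[OF P] by (simp add: is_dtree_def)
  have "card (arrs T) \<ge> 1" using e fA by (metis card_0_eq empty_iff less_one not_le)
  then have c2: "card (arrs ?G) + 1 = card (nodes ?G)" using cA cN cT by simp
  show ?thesis using f1 n1 s1 l1 c1 c2 by (simp add: is_dtree_def)
qed

private lemma glue_alab_out_distinct:
  assumes A: "(x, y) \<in> arrs T" "(x', y') \<in> arrs T" "(x, y) \<noteq> (a, b)" "(x', y') \<noteq> (a, b)"
    and ne: "(x, y) \<noteq> (x', y')" and rx: "ren x = ren x'"
  shows "alab T (x, y) \<noteq> alab T (x', y')"
proof -
  have swap: "alab T (a, y) \<noteq> alab T (b, y')"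
    if "(a, y) \<in> arrs T" "(b, y') \<in> arrs T" "y \<noteq> b" for y y'
  proof -
    have "alab T (a, y) \<noteq> K" using path_alab_out_distinct[OF P that(1) e that(3)] .
    moreover have "alab T (a, y) \<in> t a" using path_arr_meet[OF P that(1)] by auto
    ultimately have "alab T (a, y) \<notin> t b" using arr_targets_disjoint by blast
    moreover have "alab T (b, y') \<in> t b" using path_arr_meet[OF P that(2)] by auto
    ultimately show ?thesis by metis
  qed
  show ?thesis
  proof (cases "x = x'")
    case True
    then have "y \<noteq> y'" using ne by simp
    then show ?thesis using path_alab_out_distinct[OF P A(1)] A(2) True by simp
  next
    case False
    then have "(x = a \<and> x' = b) \<or> (x = b \<and> x' = a)" using rx by (auto split: if_splits)
    then show ?thesis using swap A by (metis prod.inject)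
  qed
qed

private lemma glue_alab_in_distinct:
  assumes A: "(x, y) \<in> arrs T" "(x', y') \<in> arrs T" "(x, y) \<noteq> (a, b)" "(x', y') \<noteq> (a, b)"
    and ne: "(x, y) \<noteq> (x', y')" and ry: "ren y = ren y'"
  shows "alab T (x, y) \<noteq> alab T (x', y')"
proof -
  have swap: "alab T (x, b) \<noteq> alab T (x', a)"
    if "(x, b) \<in> arrs T" "(x', a) \<in> arrs T" "x \<noteq> a" for x x'
  proof -
    have "alab T (x, b) \<noteq> K" using path_alab_in_distinct[OF P that(1) e that(3)] .
    moreover have "alab T (x, b) \<in> s b" using path_arr_meet[OF P that(1)] by auto
    ultimately have "alab T (x, b) \<notin> s a" using arr_sources_disjoint by blast
    moreover have "alab T (x', a) \<in> s a" using path_arr_meet[OF P that(2)] by auto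
    ultimately show ?thesis by metis
  qed
  show ?thesis
  proof (cases "y = y'")
    case True
    then have "x \<noteq> x'" using ne by simp
    then show ?thesis using path_alab_in_distinct[OF P A(1)] A(2) True by simp
  next
    case False
    then have "(y = a \<and> y' = b) \<or> (y = b \<and> y' = a)" using ry by (auto split: if_splits)
    then show ?thesis using swap A by (metis prod.inject)
  qed
qed

lemma glue_path: "is_path E (glue T (a, b))"
proof -
  let ?G = "glue T (a, b)"
  have meet: "\<forall>u\<in>arrs ?G. \<exists>K. snd (lab ?G (fst u)) \<inter> fst (lab ?G (snd u)) = {K}"
  proof
    fix u assume "u \<in> arrs ?G"
    then obtain x y where "(x, y) \<in> arrs T" "(x, y) \<noteq> (a, b)" "u = (ren x, ren y)"
      by (rule glue_arrsE)
    then show "\<exists>K. snd (lab ?G (fst u)) \<inter> fst (lab ?G (snd u)) = {K}"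
      using glue_arr_meet by (metis fst_conv snd_conv)
  qed
  have distinct: "\<forall>u\<in>arrs ?G. \<forall>u'\<in>arrs ?G. u \<noteq> u' \<and> (fst u = fst u' \<or> snd u = snd u')
            \<longrightarrow> alab ?G u \<noteq> alab ?G u'"
  proof (intro ballI impI)
    fix u u' assume u: "u \<in> arrs ?G" "u' \<in> arrs ?G" and c: "u \<noteq> u' \<and> (fst u = fst u' \<or> snd u = snd u')"
    obtain x y where xy: "(x, y) \<in> arrs T" "(x, y) \<noteq> (a, b)" "u = (ren x, ren y)"
      using u(1) by (rule glue_arrsE)
    obtain x' y' where xy': "(x', y') \<in> arrs T" "(x', y') \<noteq> (a, b)" "u' = (ren x', ren y')"
      using u(2) by (rule glue_arrsE)
    have "(x, y) \<noteq> (x', y')" and "ren x = ren x' \<or> ren y = ren y'" using c xy(3) xy'(3) by auto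
    then have "alab T (x, y) \<noteq> alab T (x', y')"
      using glue_alab_out_distinct[OF xy(1) xy'(1) xy(2) xy'(2)]
        glue_alab_in_distinct[OF xy(1) xy'(1) xy(2) xy'(2)] by blast
    then show "alab ?G u \<noteq> alab ?G u'" using glue_alab xy xy' by simp
  qed
  show ?thesis using glue_dtree glue_lab_in meet distinct by (simp add: is_path_def)
qed

end

section \<open>Gluing is invariant under isomorphism\<close>

lemma glue_wf_ptree:
  assumes "is_dtree T" "(a, b) \<in> arrs T"
  shows "wf_ptree (glue T (a, b))"
proof -
  have w: "wf_ptree T" using assms(1) by (rule dtree_wf_ptree)
  have ab: "a \<in> nodes T" "a \<noteq> b" using assms w by (auto simp: wf_ptree_def is_dtree_def)
  show ?thesis unfolding wf_ptree_def
  proof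
    fix u assume "u \<in> arrs (glue T (a, b))"
    then obtain w0 where w0: "w0 \<in> arrs T - {(a, b)}"
      "u = (\<lambda>(x, y). (if x = b then a else x, if y = b then a else y)) w0"
      unfolding glue_arrs by (rule imageE)
    have "fst w0 \<in> nodes T" "snd w0 \<in> nodes T" using w0(1) w by (auto simp: wf_ptree_def)
    then show "u \<in> nodes (glue T (a, b)) \<times> nodes (glue T (a, b))"
      using w0(2) ab by (auto simp: glue_nodes case_prod_beta)
  qed
qed

lemma iso_by_glue:
  assumes d: "is_dtree T" and f: "iso_by f T T'" and e: "(a, b) \<in> arrs T"
  shows "iso_by f (glue T (a, b)) (glue T' (f a, f b))"
proof -
  have w: "wf_ptree T" using d by (rule dtree_wf_ptree)
  have abn: "a \<in> nodes T" "b \<in> nodes T" using e w by (auto simp: wf_ptree_def)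
  have inj: "inj_on f (nodes T)" using iso_by_inj_on[OF f] .
  have bij: "bij_betw f (nodes T) (nodes T')" using f by (simp add: iso_by_def)
  have nodes: "bij_betw f (nodes T - {b}) (nodes T' - {f b})"
  proof -
    have "inj_on f (nodes T - {b})" using inj by (rule inj_on_subset) auto
    moreover have "f ` (nodes T - {b}) = f ` nodes T - f ` {b}"
      by (rule inj_on_image_set_diff[OF inj]) (use abn in auto)
    ultimately show ?thesis using bij by (simp add: bij_betw_def)
  qed
  let ?ff = "\<lambda>(x, y). (f x, f y)"
  let ?ren = "\<lambda>(x, y). (if x = b then a else x, if y = b then a else y)"
  let ?ren' = "\<lambda>(x, y). (if x = f b then f a else x, if y = f b then f a else y)"
  have injA: "inj_on ?ff (arrs T)" using inj w by (auto simp: inj_on_def wf_ptree_def)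
  have A: "arrs T' = ?ff ` arrs T" using f by (simp add: iso_by_def)
  have A1: "arrs T' - {(f a, f b)} = ?ff ` (arrs T - {(a, b)})"
  proof -
    have "?ff ` (arrs T - {(a, b)}) = ?ff ` arrs T - ?ff ` {(a, b)}"
      using injA e by (intro inj_on_image_set_diff) auto
    then show ?thesis using A by simp
  qed
  have comm: "?ren' (?ff u) = ?ff (?ren u)" if "u \<in> arrs T" for u
  proof -
    obtain x y where u: "u = (x, y)" by fastforce
    have "x \<in> nodes T" "y \<in> nodes T" using that u w by (auto simp: wf_ptree_def)
    then have "f x = f b \<longleftrightarrow> x = b" "f y = f b \<longleftrightarrow> y = b"
      using inj abn by (auto dest: inj_onD)
    then show ?thesis using u by auto
  qed
  have arrs: "arrs (glue T' (f a, f b)) = ?ff ` arrs (glue T (a, b))"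
  proof -
    have "arrs (glue T' (f a, f b)) = ?ren' ` ?ff ` (arrs T - {(a, b)})"
      by (simp only: glue_arrs A1)
    also have "\<dots> = (\<lambda>u. ?ren' (?ff u)) ` (arrs T - {(a, b)})" by (simp add: image_image)
    also have "\<dots> = (\<lambda>u. ?ff (?ren u)) ` (arrs T - {(a, b)})"
      by (rule image_cong[OF refl]) (use comm in auto)
    also have "\<dots> = ?ff ` arrs (glue T (a, b))" by (simp only: glue_arrs image_image)
    finally show ?thesis .
  qed
  have labs: "\<forall>x\<in>nodes (glue T (a, b)). lab (glue T' (f a, f b)) (f x) = lab (glue T (a, b)) x"
  proof
    fix x assume "x \<in> nodes (glue T (a, b))"
    then have x: "x \<in> nodes T" "x \<noteq> b" by (auto simp: glue_nodes)
    have xa: "f x = f a \<longleftrightarrow> x = a" using inj x abn by (auto dest: inj_onD)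
    show "lab (glue T' (f a, f b)) (f x) = lab (glue T (a, b)) x"
      using xa iso_by_lab[OF f x(1)] iso_by_lab[OF f abn(1)] iso_by_lab[OF f abn(2)] iso_by_alab[OF f abn]
      by (simp add: glue_lab)
  qed
  show ?thesis using nodes arrs labs by (simp add: iso_by_def glue_nodes)
qed

lemma bdry_tree_iso_invariant:
  assumes d: "is_dtree T" and f: "iso_by f T T'"
  shows "bdry_tree T' = bdry_tree T"
proof -
  have w: "wf_ptree T" using d by (rule dtree_wf_ptree)
  let ?ff = "\<lambda>(x, y). (f x, f y)"
  have injA: "inj_on ?ff (arrs T)" using iso_by_inj_on[OF f] w by (auto simp: inj_on_def wf_ptree_def)
  have A: "arrs T' = ?ff ` arrs T" using f by (simp add: iso_by_def)
  have cl: "cls (glue T' (?ff u)) = cls (glue T u)" if "u \<in> arrs T" for u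
  proof -
    obtain x y where u: "u = (x, y)" by fastforce
    have "iso_by f (glue T (x, y)) (glue T' (f x, f y))" using iso_by_glue[OF d f] that u by simp
    then have "ptree_iso (glue T (x, y)) (glue T' (f x, f y))" unfolding ptree_iso_iff by blast
    moreover have "wf_ptree (glue T (x, y))" using glue_wf_ptree[OF d] that u by simp
    ultimately show ?thesis using cls_eq_iff u by fastforce
  qed
  have "card {u' \<in> arrs T'. cls (glue T' u') = C} = card {u \<in> arrs T. cls (glue T u) = C}" for C
  proof -
    have "{u' \<in> arrs T'. cls (glue T' u') = C} = ?ff ` {u \<in> arrs T. cls (glue T u) = C}"
      unfolding A using cl by auto
    moreover have "inj_on ?ff {u \<in> arrs T. cls (glue T u) = C}" using injA by (rule inj_on_subset) auto
    ultimately show ?thesis by (simp add: card_image)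
  qed
  then show ?thesis by (simp add: bdry_tree_def f2sum_def)
qed

section \<open>Refinement undoes gluing\<close>

lemma psrc_len2: "psrc (len2 e1 e2) = fst e1 \<union> (fst e2 - {the_elem (snd e1 \<inter> fst e2)})"
proof -
  have "psrc (len2 e1 e2) = (fst e1 - {}) \<union> (fst e2 - {alab (len2 e1 e2) (0, 1)})"
    unfolding psrc_def by (auto simp: len2_def)
  then show ?thesis by (simp add: alab_def len2_def)
qed

lemma ptgt_len2: "ptgt (len2 e1 e2) = (snd e1 - {the_elem (snd e1 \<inter> fst e2)}) \<union> snd e2"
proof -
  have "ptgt (len2 e1 e2) = (snd e1 - {alab (len2 e1 e2) (0, 1)}) \<union> (snd e2 - {})"
    unfolding ptgt_def by (auto simp: len2_def)
  then show ?thesis by (simp add: alab_def len2_def)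
qed

lemma len2_is_path:
  assumes "e1 \<in> E" "e2 \<in> E" "snd e1 \<inter> fst e2 = {K}"
  shows "is_path E (len2 e1 e2)"
proof -
  have d: "is_dtree (len2 e1 e2)"
  proof -
    have c: "((0::nat), (1::nat)) \<in> ({(0, 1)} \<union> {(0, 1)}\<inverse>)\<^sup>*" "((1::nat), (0::nat)) \<in> ({(0, 1)} \<union> {(0, 1)}\<inverse>)\<^sup>*"
      by blast+
    show ?thesis unfolding is_dtree_def len2_def using c by auto
  qed
  show ?thesis unfolding is_path_def using d assms by (auto simp: len2_def)
qed

lemma refine_nodes: "nodes (refine T v e1 e2) = insert (Suc (Max (nodes T))) (nodes T)"
  by (simp add: refine_def Let_def)

lemma refine_lab: "lab (refine T v e1 e2) = (lab T)(v := e1, Suc (Max (nodes T)) := e2)"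
  by (simp add: refine_def Let_def)

lemma refine_arrs: "arrs (refine T v e1 e2) =
   {e \<in> arrs T. fst e \<noteq> v \<and> snd e \<noteq> v} \<union> {(v, Suc (Max (nodes T)))}
   \<union> {(c, if alab T (c, v) \<in> fst e1 then v else Suc (Max (nodes T))) | c. (c, v) \<in> arrs T}
   \<union> {(if alab T (v, c) \<in> snd e2 then Suc (Max (nodes T)) else v, c) | c. (v, c) \<in> arrs T}"
  by (simp add: refine_def Let_def)

lemma Suc_Max_notin: "finite N \<Longrightarrow> Suc (Max N) \<notin> N"
  using Max_ge not_less_eq_eq by blast

lemma refine_terms_lab:
  assumes "(v, e1, e2) \<in> refine_terms E T"
  shows "lab T v = hmerge e1 e2 (the_elem (snd e1 \<inter> fst e2))"
  using assms by (simp add: refine_terms_def psrc_len2 ptgt_len2 hmerge_def prod_eq_iff)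


context
  fixes T :: "'v ptree" and v :: nat and e1 e2 :: "'v hedge"
  assumes d: "is_dtree T" and v: "v \<in> nodes T"
begin

private abbreviation "vfresh \<equiv> Suc (Max (nodes T))"
private abbreviation "contract_fresh \<equiv> \<lambda>(x, z). (if x = vfresh then v else x, if z = vfresh then v else z)"

private lemma vfresh_notin: "vfresh \<notin> nodes T"
  using Suc_Max_notin d by (simp add: is_dtree_def)

private lemma arr_nodes_T: "(x, z) \<in> arrs T \<Longrightarrow> x \<in> nodes T \<and> z \<in> nodes T"
  using d by (auto simp: is_dtree_def)

private lemma noloop_T: "(x, x) \<notin> arrs T"
  using d by (simp add: is_dtree_def)

private lemma glue_refine_arrs_subset: "contract_fresh ` (arrs (refine T v e1 e2) - {(v, vfresh)}) \<subseteq> arrs T"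
  proof
    fix u assume "u \<in> contract_fresh ` (arrs (refine T v e1 e2) - {(v, vfresh)})"
    then obtain w0 where w0: "w0 \<in> arrs (refine T v e1 e2)" "w0 \<noteq> (v, vfresh)" "u = contract_fresh w0" by blast
    from w0(1) consider (a1) "w0 \<in> arrs T" "fst w0 \<noteq> v" "snd w0 \<noteq> v"
      | (a2) "w0 = (v, vfresh)"
      | (a3) c where "(c, v) \<in> arrs T" "w0 = (c, if alab T (c, v) \<in> fst e1 then v else vfresh)"
      | (a4) c where "(v, c) \<in> arrs T" "w0 = (if alab T (v, c) \<in> snd e2 then vfresh else v, c)"
      unfolding refine_arrs by blast
    then show "u \<in> arrs T"
    proof cases
      case a1
      then have "fst w0 \<noteq> vfresh" "snd w0 \<noteq> vfresh" using arr_nodes_T[of "fst w0" "snd w0"] vfresh_notin by auto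
      then show ?thesis using a1 w0(3) by (auto simp: case_prod_beta)
    next
      case a2 then show ?thesis using w0 by simp
    next
      case a3
      have "c \<noteq> vfresh" using arr_nodes_T[OF a3(1)] vfresh_notin by auto
      then have "u = (c, v)" using a3 w0(3) by auto
      then show ?thesis using a3 by simp
    next
      case a4
      have "c \<noteq> vfresh" using arr_nodes_T[OF a4(1)] vfresh_notin by auto
      then have "u = (v, c)" using a4 w0(3) by auto
      then show ?thesis using a4 by simp
    qed
  qed

private lemma glue_refine_arrs_supset: "arrs T \<subseteq> contract_fresh ` (arrs (refine T v e1 e2) - {(v, vfresh)})"
  proof
    fix u assume u: "u \<in> arrs T"
    obtain x z where xz: "u = (x, z)" by fastforce
    have xzn: "x \<in> nodes T" "z \<in> nodes T" using arr_nodes_T u xz by auto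
    then have xy: "x \<noteq> vfresh" "z \<noteq> vfresh" using vfresh_notin by auto
    show "u \<in> contract_fresh ` (arrs (refine T v e1 e2) - {(v, vfresh)})"
    proof (cases "x = v \<or> z = v")
      case False
      then have "u \<in> arrs (refine T v e1 e2)" "u \<noteq> (v, vfresh)" using u xz xy unfolding refine_arrs by auto
      moreover have "contract_fresh u = u" using xz xy by simp
      ultimately show ?thesis by (intro rev_image_eqI[of u]) auto
    next
      case True
      then show ?thesis
      proof
        assume zv: "z = v"
        let ?w = "(x, if alab T (x, v) \<in> fst e1 then v else vfresh)"
        have "?w \<in> arrs (refine T v e1 e2)" using u xz zv unfolding refine_arrs by blast
        moreover have "?w \<noteq> (v, vfresh)" using noloop_T u xz zv by auto
        moreover have "contract_fresh ?w = u" using xz zv xy by auto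
        ultimately show ?thesis by (intro rev_image_eqI[of ?w]) auto
      next
        assume xv: "x = v"
        let ?w = "(if alab T (v, z) \<in> snd e2 then vfresh else v, z)"
        have "?w \<in> arrs (refine T v e1 e2)" using u xz xv unfolding refine_arrs by blast
        moreover have "?w \<noteq> (v, vfresh)" using xy by auto
        moreover have "contract_fresh ?w = u" using xz xv xy by auto
        ultimately show ?thesis by (intro rev_image_eqI[of ?w]) auto
      qed
    qed
  qed

lemma arrs_glue_refine: "arrs (glue (refine T v e1 e2) (v, vfresh)) = arrs T"
  unfolding glue_arrs using glue_refine_arrs_subset glue_refine_arrs_supset by blast

lemma glue_refine_inverse:
  assumes lv: "lab T v = hmerge e1 e2 (the_elem (snd e1 \<inter> fst e2))"
  shows "iso_by id T (glue (refine T v e1 e2) (v, Suc (Max (nodes T))))"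
proof -
  let ?y = "Suc (Max (nodes T))"
  let ?R = "refine T v e1 e2"
  let ?G = "glue ?R (v, ?y)"
  have yn: "?y \<notin> nodes T" using vfresh_notin .
  have vy: "v \<noteq> ?y" using v yn by auto
  have N: "nodes ?G = nodes T" using yn by (simp add: glue_nodes refine_nodes)
  have A: "arrs ?G = arrs T" using arrs_glue_refine .
  have al: "alab ?R (v, ?y) = the_elem (snd e1 \<inter> fst e2)"
    using vy by (simp add: alab_def refine_lab)
  have L: "\<forall>x\<in>nodes T. lab ?G (id x) = lab T x"
  proof
    fix x assume x: "x \<in> nodes T"
    show "lab ?G (id x) = lab T x"
    proof (cases "x = v")
      case True then show ?thesis using lv al vy by (simp add: glue_lab refine_lab)
    next
      case False then have "x \<noteq> ?y" using x yn by auto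
      then show ?thesis using False by (simp add: glue_lab refine_lab)
    qed
  qed
  show ?thesis using N A L by (simp add: iso_by_def)
qed

end

context
  fixes T T' :: "'v ptree" and g :: "nat \<Rightarrow> nat" and v :: nat
  assumes d: "is_dtree T" and d': "is_dtree T'" and g: "iso_by g T T'" and v: "v \<in> nodes T"
begin

private abbreviation "newT \<equiv> Suc (Max (nodes T))"
private abbreviation "newT' \<equiv> Suc (Max (nodes T'))"
private abbreviation "gext x \<equiv> (if x = newT then newT' else g x)"
private abbreviation "gext2 \<equiv> \<lambda>(a, b). (gext a, gext b)"

private lemma arr_nodes: "(x, z) \<in> arrs T \<Longrightarrow> x \<in> nodes T \<and> z \<in> nodes T"
  using d by (auto simp: is_dtree_def)

private lemma newT_notin: "newT \<notin> nodes T"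
  using Suc_Max_notin d by (simp add: is_dtree_def)

private lemma newT'_notin: "newT' \<notin> nodes T'"
  using Suc_Max_notin d' by (simp add: is_dtree_def)

private lemma gext_eq: "x \<in> nodes T \<Longrightarrow> gext x = g x"
  using newT_notin by auto

private lemma g_eq_iff: "x \<in> nodes T \<Longrightarrow> z \<in> nodes T \<Longrightarrow> g x = g z \<longleftrightarrow> x = z"
  using iso_by_inj_on[OF g] by (auto dest: inj_onD)

private lemma arrs_T'_cases: "u \<in> arrs T' \<Longrightarrow> \<exists>x z. (x, z) \<in> arrs T \<and> u = (g x, g z)"
  using iso_by_arrsE[OF g] by metis

private lemma iso_by_refine_arrs_off:
  "gext2 ` {u \<in> arrs T. fst u \<noteq> v \<and> snd u \<noteq> v} = {u \<in> arrs T'. fst u \<noteq> g v \<and> snd u \<noteq> g v}"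
proof
  show "gext2 ` {u \<in> arrs T. fst u \<noteq> v \<and> snd u \<noteq> v} \<subseteq> {u \<in> arrs T'. fst u \<noteq> g v \<and> snd u \<noteq> g v}"
  proof
    fix u assume "u \<in> gext2 ` {u \<in> arrs T. fst u \<noteq> v \<and> snd u \<noteq> v}"
    then obtain x z where xz: "(x, z) \<in> arrs T" "x \<noteq> v" "z \<noteq> v" "u = gext2 (x, z)" by auto
    have n: "x \<in> nodes T" "z \<in> nodes T" using arr_nodes[OF xz(1)] by auto
    then have "u = (g x, g z)" using xz(4) gext_eq by simp
    moreover have "(g x, g z) \<in> arrs T'" using iso_by_arr[OF g xz(1)] .
    moreover have "g x \<noteq> g v" "g z \<noteq> g v" using g_eq_iff n v xz by auto
    ultimately show "u \<in> {u \<in> arrs T'. fst u \<noteq> g v \<and> snd u \<noteq> g v}" by simp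
  qed
next
  show "{u \<in> arrs T'. fst u \<noteq> g v \<and> snd u \<noteq> g v} \<subseteq> gext2 ` {u \<in> arrs T. fst u \<noteq> v \<and> snd u \<noteq> v}"
  proof
    fix u assume u: "u \<in> {u \<in> arrs T'. fst u \<noteq> g v \<and> snd u \<noteq> g v}"
    then obtain x z where xz: "(x, z) \<in> arrs T" "u = (g x, g z)" using arrs_T'_cases by blast
    have n: "x \<in> nodes T" "z \<in> nodes T" using arr_nodes[OF xz(1)] by auto
    have "x \<noteq> v" "z \<noteq> v" using u xz by auto
    moreover have "gext2 (x, z) = u" using xz n gext_eq by simp
    ultimately show "u \<in> gext2 ` {u \<in> arrs T. fst u \<noteq> v \<and> snd u \<noteq> v}"
      using xz(1) by (intro rev_image_eqI[of "(x, z)"]) auto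
  qed
qed


private lemma iso_by_refine_arrs_in:
  "gext2 ` {(c, if alab T (c, v) \<in> fst e1 then v else newT) | c. (c, v) \<in> arrs T} = {(c, if alab T' (c, g v) \<in> fst e1 then g v else newT') | c. (c, g v) \<in> arrs T'}"
proof
  show "gext2 ` {(c, if alab T (c, v) \<in> fst e1 then v else newT) | c. (c, v) \<in> arrs T}
    \<subseteq> {(c, if alab T' (c, g v) \<in> fst e1 then g v else newT') | c. (c, g v) \<in> arrs T'}"
  proof
    fix u assume "u \<in> gext2 ` {(c, if alab T (c, v) \<in> fst e1 then v else newT) | c. (c, v) \<in> arrs T}"
    then obtain c where c: "(c, v) \<in> arrs T" "u = gext2 (c, if alab T (c, v) \<in> fst e1 then v else newT)" by blast
    have cn: "c \<in> nodes T" using arr_nodes[OF c(1)] by auto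
    have al: "alab T' (g c, g v) = alab T (c, v)" using iso_by_alab[OF g cn v] .
    have "u = (g c, if alab T' (g c, g v) \<in> fst e1 then g v else newT')"
      using c(2) gext_eq[OF cn] gext_eq[OF v] al by auto
    moreover have "(g c, g v) \<in> arrs T'" using iso_by_arr[OF g c(1)] .
    ultimately show "u \<in> {(c, if alab T' (c, g v) \<in> fst e1 then g v else newT') | c. (c, g v) \<in> arrs T'}"
      by blast
  qed
next
  show "{(c, if alab T' (c, g v) \<in> fst e1 then g v else newT') | c. (c, g v) \<in> arrs T'}
    \<subseteq> gext2 ` {(c, if alab T (c, v) \<in> fst e1 then v else newT) | c. (c, v) \<in> arrs T}"
  proof
    fix u assume "u \<in> {(c, if alab T' (c, g v) \<in> fst e1 then g v else newT') | c. (c, g v) \<in> arrs T'}"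
    then obtain c' where c': "(c', g v) \<in> arrs T'" "u = (c', if alab T' (c', g v) \<in> fst e1 then g v else newT')"
      by blast
    obtain x z where xz: "(x, z) \<in> arrs T" "(c', g v) = (g x, g z)" using arrs_T'_cases[OF c'(1)] by blast
    have n: "x \<in> nodes T" "z \<in> nodes T" using arr_nodes[OF xz(1)] by auto
    have zv: "z = v" using xz(2) g_eq_iff[OF n(2) v] by simp
    have al: "alab T' (g x, g v) = alab T (x, v)" using iso_by_alab[OF g n(1) v] .
    have "gext2 (x, if alab T (x, v) \<in> fst e1 then v else newT) = u"
      using c' xz(2) gext_eq[OF n(1)] gext_eq[OF v] al by auto
    moreover have "(x, v) \<in> arrs T" using xz(1) zv by simp
    ultimately show "u \<in> gext2 ` {(c, if alab T (c, v) \<in> fst e1 then v else newT) | c. (c, v) \<in> arrs T}"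
      by blast
  qed
qed


private lemma iso_by_refine_arrs_out:
  "gext2 ` {(if alab T (v, c) \<in> snd e2 then newT else v, c) | c. (v, c) \<in> arrs T} = {(if alab T' (g v, c) \<in> snd e2 then newT' else g v, c) | c. (g v, c) \<in> arrs T'}"
proof
  show "gext2 ` {(if alab T (v, c) \<in> snd e2 then newT else v, c) | c. (v, c) \<in> arrs T}
    \<subseteq> {(if alab T' (g v, c) \<in> snd e2 then newT' else g v, c) | c. (g v, c) \<in> arrs T'}"
  proof
    fix u assume "u \<in> gext2 ` {(if alab T (v, c) \<in> snd e2 then newT else v, c) | c. (v, c) \<in> arrs T}"
    then obtain c where c: "(v, c) \<in> arrs T" "u = gext2 (if alab T (v, c) \<in> snd e2 then newT else v, c)" by blast
    have cn: "c \<in> nodes T" using arr_nodes[OF c(1)] by auto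
    have al: "alab T' (g v, g c) = alab T (v, c)" using iso_by_alab[OF g v cn] .
    have "u = (if alab T' (g v, g c) \<in> snd e2 then newT' else g v, g c)"
      using c(2) gext_eq[OF cn] gext_eq[OF v] al by auto
    moreover have "(g v, g c) \<in> arrs T'" using iso_by_arr[OF g c(1)] .
    ultimately show "u \<in> {(if alab T' (g v, c) \<in> snd e2 then newT' else g v, c) | c. (g v, c) \<in> arrs T'}"
      by blast
  qed
next
  show "{(if alab T' (g v, c) \<in> snd e2 then newT' else g v, c) | c. (g v, c) \<in> arrs T'}
    \<subseteq> gext2 ` {(if alab T (v, c) \<in> snd e2 then newT else v, c) | c. (v, c) \<in> arrs T}"
  proof
    fix u assume "u \<in> {(if alab T' (g v, c) \<in> snd e2 then newT' else g v, c) | c. (g v, c) \<in> arrs T'}"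
    then obtain c' where c': "(g v, c') \<in> arrs T'" "u = (if alab T' (g v, c') \<in> snd e2 then newT' else g v, c')"
      by blast
    obtain x z where xz: "(x, z) \<in> arrs T" "(g v, c') = (g x, g z)" using arrs_T'_cases[OF c'(1)] by blast
    have n: "x \<in> nodes T" "z \<in> nodes T" using arr_nodes[OF xz(1)] by auto
    have xv: "x = v" using xz(2) g_eq_iff[OF n(1) v] by simp
    have al: "alab T' (g v, g z) = alab T (v, z)" using iso_by_alab[OF g v n(2)] .
    have "gext2 (if alab T (v, z) \<in> snd e2 then newT else v, z) = u"
      using c' xz(2) gext_eq[OF n(2)] gext_eq[OF v] al by auto
    moreover have "(v, z) \<in> arrs T" using xz(1) xv by simp
    ultimately show "u \<in> gext2 ` {(if alab T (v, c) \<in> snd e2 then newT else v, c) | c. (v, c) \<in> arrs T}"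
      by blast
  qed
qed


lemma iso_by_refine:
  "iso_by (\<lambda>x. if x = Suc (Max (nodes T)) then Suc (Max (nodes T')) else g x)
     (refine T v e1 e2) (refine T' (g v) e1 e2)"
proof -
  have gn: "\<And>x. x \<in> nodes T \<Longrightarrow> g x \<in> nodes T'" using iso_by_node[OF g] .
  have gv: "g v \<in> nodes T'" using gn[OF v] .
  have nodes: "bij_betw gext (insert newT (nodes T)) (insert newT' (nodes T'))"
  proof -
    have "bij_betw gext (nodes T) (nodes T')"
      using g unfolding iso_by_def by (rule bij_betw_cong[THEN iffD1, rotated, OF conjunct1]) (use gext_eq in auto)
    then have "bij_betw gext (nodes T \<union> {newT}) (nodes T' \<union> {gext newT})"
      using newT_notin newT'_notin by (intro notIn_Un_bij_betw) auto
    then show ?thesis by simp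
  qed
  have P2: "gext2 ` {(v, newT)} = {(g v, newT')}" using gext_eq[OF v] by simp
  have arrs: "arrs (refine T' (g v) e1 e2) = gext2 ` arrs (refine T v e1 e2)"
    unfolding refine_arrs image_Un iso_by_refine_arrs_off P2 iso_by_refine_arrs_in iso_by_refine_arrs_out ..
  have labs: "\<forall>x\<in>nodes (refine T v e1 e2). lab (refine T' (g v) e1 e2) (gext x) = lab (refine T v e1 e2) x"
  proof
    fix x assume "x \<in> nodes (refine T v e1 e2)"
    then have x: "x = newT \<or> x \<in> nodes T" by (simp add: refine_nodes)
    have vy: "v \<noteq> newT" using v newT_notin by auto
    have gvy: "g v \<noteq> newT'" using gv newT'_notin by auto
    show "lab (refine T' (g v) e1 e2) (gext x) = lab (refine T v e1 e2) x"
    proof (cases "x = newT")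
      case True then show ?thesis using gvy by (simp add: refine_lab)
    next
      case False
      then have xn: "x \<in> nodes T" using x by simp
      have gxy: "g x \<noteq> newT'" using gn[OF xn] newT'_notin by auto
      show ?thesis
      proof (cases "x = v")
        case True then show ?thesis using False vy gvy by (simp add: refine_lab)
      next
        case xv: False
        have "g x \<noteq> g v" using g_eq_iff[OF xn v] xv by simp
        then show ?thesis using False xv gxy iso_by_lab[OF g xn] by (simp add: refine_lab)
      qed
    qed
  qed
  show ?thesis using nodes arrs labs by (simp add: iso_by_def refine_nodes)
qed

end

context
  fixes E :: "'v hedge set" and T :: "'v ptree" and a b :: nat
  assumes H: "is_higraph E" and P: "is_path E T" and e: "(a, b) \<in> arrs T"
begin

private abbreviation "G \<equiv> glue T (a, b)"
private abbreviation "fresh \<equiv> Suc (Max (nodes G))"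
private abbreviation "R \<equiv> refine G a (lab T a) (lab T b)"
private abbreviation "contract z \<equiv> (if z = b then a else z)"
private abbreviation "phi x \<equiv> (if x = b then fresh else x)"

private lemma ends: "a \<in> nodes T" "b \<in> nodes T" "a \<noteq> b"
  using path_arr_ends[OF P e] by auto

private lemma no_back_arr: "(b, a) \<notin> arrs T"
  using path_no_2cycle[OF P e] .

private lemma no_loop: "(x, x) \<notin> arrs T"
  using path_no_loop[OF P] .

private lemma glue_no_loop: "(x, x) \<notin> arrs G"
  using glue_dtree[OF H P e] by (simp add: is_dtree_def)

private lemma fresh_notin: "fresh \<notin> nodes G"
  using Suc_Max_notin glue_dtree[OF H P e] by (simp add: is_dtree_def)

private lemma fresh_ne_a: "fresh \<noteq> a"
  using fresh_notin ends by (auto simp: glue_nodes)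

private lemma glue_arr_cases:
  "u \<in> arrs G \<Longrightarrow> \<exists>x z. (x, z) \<in> arrs T \<and> (x, z) \<noteq> (a, b) \<and> u = (contract x, contract z)"
  using glue_arrsE[OF H P e] by metis

private lemma into_a: "(x, a) \<in> arrs T \<Longrightarrow> alab T (x, a) \<in> fst (lab T a)"
  using path_arr_meet[OF P] by blast

private lemma into_b: "(x, b) \<in> arrs T \<Longrightarrow> x \<noteq> a \<Longrightarrow> alab T (x, b) \<notin> fst (lab T a)"
  using path_arr_meet[OF P] path_alab_in_distinct[OF P _ e] arr_sources_disjoint[OF H P e] by blast

private lemma out_of_b: "(b, z) \<in> arrs T \<Longrightarrow> alab T (b, z) \<in> snd (lab T b)"
  using path_arr_meet[OF P] by blast

private lemma out_of_a: "(a, z) \<in> arrs T \<Longrightarrow> z \<noteq> b \<Longrightarrow> alab T (a, z) \<notin> snd (lab T b)"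
  using path_arr_meet[OF P] path_alab_out_distinct[OF P _ e] arr_targets_disjoint[OF H P e] by blast

private lemma arrs_R: "arrs R = {u \<in> arrs G. fst u \<noteq> a \<and> snd u \<noteq> a} \<union> {(a, fresh)}
     \<union> {(c, if alab G (c, a) \<in> fst (lab T a) then a else fresh) | c. (c, a) \<in> arrs G}
     \<union> {(if alab G (a, c) \<in> snd (lab T b) then fresh else a, c) | c. (a, c) \<in> arrs G}"
  by (rule refine_arrs)

private lemma refine_glue_arrs_supset: "(\<lambda>(x, z). (phi x, phi z)) ` arrs T \<subseteq> arrs R"
proof
  fix u assume "u \<in> (\<lambda>(x, z). (phi x, phi z)) ` arrs T"
  then obtain x z where xz: "(x, z) \<in> arrs T" "u = (phi x, phi z)" by auto
  have xzne: "x \<noteq> z" using no_loop xz(1) by auto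
  show "u \<in> arrs R"
  proof (cases "(x, z) = (a, b)")
    case True then show ?thesis using xz(2) ends arrs_R by auto
  next
    case ne: False
    have Gxz: "(contract x, contract z) \<in> arrs G" using glue_arrI[OF H P e xz(1) ne] .
    have Gl: "alab G (contract x, contract z) = alab T (x, z)" using glue_alab[OF H P e xz(1) ne] .
    consider (n) "x \<noteq> a" "x \<noteq> b" "z \<noteq> a" "z \<noteq> b"
      | (za) "z = a" | (zb) "z = b" | (xa) "x = a" | (xb) "x = b" by blast
    then show ?thesis
    proof cases
      case n then show ?thesis using Gxz xz(2) arrs_R by auto
    next
      case za
      then have x: "x \<noteq> a" "x \<noteq> b" using xzne xz(1) no_back_arr by auto
      have "alab G (x, a) \<in> fst (lab T a)" using Gl into_a xz(1) za x ends by auto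
      moreover have "(x, a) \<in> arrs G" using Gxz za x ends by auto
      ultimately show ?thesis using xz(2) za x ends arrs_R by auto
    next
      case zb
      then have x: "x \<noteq> a" "x \<noteq> b" using ne xzne by auto
      have "alab G (x, a) \<notin> fst (lab T a)" using Gl into_b xz(1) zb x by auto
      moreover have "(x, a) \<in> arrs G" using Gxz zb x by auto
      ultimately show ?thesis using xz(2) zb x ends arrs_R by auto
    next
      case xa
      then have z: "z \<noteq> a" "z \<noteq> b" using ne xzne by auto
      have "alab G (a, z) \<notin> snd (lab T b)" using Gl out_of_a xz(1) xa z by auto
      moreover have "(a, z) \<in> arrs G" using Gxz xa z by auto
      ultimately show ?thesis using xz(2) xa z ends arrs_R by auto
    next
      case xb
      then have z: "z \<noteq> a" "z \<noteq> b" using xzne xz(1) no_back_arr by auto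
      have "alab G (a, z) \<in> snd (lab T b)" using Gl out_of_b xz(1) xb z ends by auto
      moreover have "(a, z) \<in> arrs G" using Gxz xb z ends by auto
      ultimately show ?thesis using xz(2) xb z ends arrs_R by auto
    qed
  qed
qed


private lemma refine_glue_arrs_subset: "arrs R \<subseteq> (\<lambda>(x, z). (phi x, phi z)) ` arrs T"
proof
  fix u assume "u \<in> arrs R"
  then consider (p1) "u \<in> arrs G" "fst u \<noteq> a" "snd u \<noteq> a"
    | (p2) "u = (a, fresh)"
    | (p3) c where "(c, a) \<in> arrs G" "u = (c, if alab G (c, a) \<in> fst (lab T a) then a else fresh)"
    | (p4) c where "(a, c) \<in> arrs G" "u = (if alab G (a, c) \<in> snd (lab T b) then fresh else a, c)"
    unfolding arrs_R by blast
  then show "u \<in> (\<lambda>(x, z). (phi x, phi z)) ` arrs T"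
  proof cases
    case p1
    obtain x z where xz: "(x, z) \<in> arrs T" "(x, z) \<noteq> (a, b)" "u = (contract x, contract z)" using glue_arr_cases[OF p1(1)] by blast
    have "x \<noteq> a" "x \<noteq> b" "z \<noteq> a" "z \<noteq> b" using p1 xz(3) by (auto split: if_splits)
    then have "u = (phi x, phi z)" using xz(3) by simp
    then show ?thesis using xz(1) by (intro rev_image_eqI[of "(x, z)"]) auto
  next
    case p2
    then have "u = (phi a, phi b)" using ends by simp
    then show ?thesis using e by (intro rev_image_eqI[of "(a, b)"]) auto
  next
    case p3
    obtain x z where xz: "(x, z) \<in> arrs T" "(x, z) \<noteq> (a, b)" "(c, a) = (contract x, contract z)" using glue_arr_cases[OF p3(1)] by blast
    have ca: "c \<noteq> a" using glue_no_loop p3(1) by auto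
    then have x: "x \<noteq> a" "x \<noteq> b" "c = x" using xz(3) by (auto split: if_splits)
    have z: "z = a \<or> z = b" using xz(3) by (auto split: if_splits)
    have Gl: "alab G (c, a) = alab T (x, z)" using glue_alab[OF H P e xz(1,2)] xz(3) by simp
    show ?thesis
    proof (cases "z = a")
      case True
      then have "u = (phi x, phi z)" using p3(2) Gl into_a xz(1) x ends by auto
      then show ?thesis using xz(1) by (intro rev_image_eqI[of "(x, z)"]) auto
    next
      case False
      then have zb: "z = b" using z by simp
      then have "u = (phi x, phi z)" using p3(2) Gl into_b xz(1) x by auto
      then show ?thesis using xz(1) by (intro rev_image_eqI[of "(x, z)"]) auto
    qed
  next
    case p4
    obtain x z where xz: "(x, z) \<in> arrs T" "(x, z) \<noteq> (a, b)" "(a, c) = (contract x, contract z)" using glue_arr_cases[OF p4(1)] by blast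
    have ca: "c \<noteq> a" using glue_no_loop p4(1) by auto
    then have z: "z \<noteq> a" "z \<noteq> b" "c = z" using xz(3) by (auto split: if_splits)
    have x: "x = a \<or> x = b" using xz(3) by (auto split: if_splits)
    have Gl: "alab G (a, c) = alab T (x, z)" using glue_alab[OF H P e xz(1,2)] xz(3) by simp
    show ?thesis
    proof (cases "x = a")
      case True
      then have "u = (phi x, phi z)" using p4(2) Gl out_of_a xz(1) z ends by auto
      then show ?thesis using xz(1) by (intro rev_image_eqI[of "(x, z)"]) auto
    next
      case False
      then have xb: "x = b" using x by simp
      then have "u = (phi x, phi z)" using p4(2) Gl out_of_b xz(1) z by auto
      then show ?thesis using xz(1) by (intro rev_image_eqI[of "(x, z)"]) auto
    qed
  qed
qed


lemma refine_glue_inverse: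
  "iso_by (\<lambda>x. if x = b then Suc (Max (nodes (glue T (a, b)))) else x) T
     (refine (glue T (a, b)) a (lab T a) (lab T b))"
proof -
  have arrs: "arrs R = (\<lambda>(x, z). (phi x, phi z)) ` arrs T" using refine_glue_arrs_supset refine_glue_arrs_subset by blast
  have nodes: "bij_betw phi (nodes T) (nodes R)"
  proof -
    have "bij_betw id (nodes T - {b}) (nodes T - {b})" by simp
    then have "bij_betw phi (nodes T - {b}) (nodes T - {b})"
      by (rule bij_betw_cong[THEN iffD1, rotated]) auto
    then have "bij_betw phi ((nodes T - {b}) \<union> {b}) ((nodes T - {b}) \<union> {phi b})"
      using fresh_notin glue_nodes by (intro notIn_Un_bij_betw) auto
    moreover have "(nodes T - {b}) \<union> {b} = nodes T" using ends by auto
    moreover have "nodes R = (nodes T - {b}) \<union> {phi b}" using glue_nodes by (auto simp: refine_nodes)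
    ultimately show ?thesis by simp
  qed
  have labs: "\<forall>x\<in>nodes T. lab R (phi x) = lab T x"
  proof
    fix x assume x: "x \<in> nodes T"
    show "lab R (phi x) = lab T x"
    proof (cases "x = b")
      case True then show ?thesis by (simp add: refine_lab)
    next
      case False
      then have xy: "x \<noteq> fresh" using x fresh_notin glue_nodes by auto
      show ?thesis
      proof (cases "x = a")
        case True then show ?thesis using fresh_ne_a False by (simp add: refine_lab)
      next
        case False then show ?thesis using xy \<open>x \<noteq> b\<close> by (simp add: refine_lab glue_lab)
      qed
    qed
  qed
  show ?thesis using nodes arrs labs by (simp add: iso_by_def)
qed


end

section \<open>Gluing and refining are dual\<close>

lemma iso_by_refine_of_glue:
  assumes H: "is_higraph E" and Ps: "is_path E \<sigma>" and dr: "is_dtree \<rho>"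
    and ab: "(a, b) \<in> arrs \<sigma>" and g: "iso_by g (glue \<sigma> (a, b)) \<rho>"
  shows "iso_by (\<lambda>x. if x = b then Suc (Max (nodes \<rho>)) else g x) \<sigma>
           (refine \<rho> (g a) (lab \<sigma> a) (lab \<sigma> b))"
proof -
  let ?G = "glue \<sigma> (a, b)"
  let ?y0 = "Suc (Max (nodes ?G))" and ?yr = "Suc (Max (nodes \<rho>))"
  have dG: "is_dtree ?G" using glue_dtree[OF H Ps ab] .
  have aG: "a \<in> nodes ?G" using path_arr_ends[OF Ps ab] by (simp add: glue_nodes)
  have y0n: "?y0 \<notin> nodes ?G" using Suc_Max_notin dG by (simp add: is_dtree_def)
  have ws: "wf_ptree \<sigma>" using Ps by (simp add: is_path_def dtree_wf_ptree)
  have "iso_by ((\<lambda>x. if x = ?y0 then ?yr else g x) \<circ> (\<lambda>x. if x = b then ?y0 else x)) \<sigma>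
          (refine \<rho> (g a) (lab \<sigma> a) (lab \<sigma> b))"
    using iso_by_comp[OF refine_glue_inverse[OF H Ps ab] iso_by_refine[OF dG dr g aG]] .
  moreover have "\<forall>x\<in>nodes \<sigma>. ((\<lambda>x. if x = ?y0 then ?yr else g x) \<circ> (\<lambda>x. if x = b then ?y0 else x)) x
      = (if x = b then ?yr else g x)"
    using y0n by (auto simp: glue_nodes)
  ultimately show ?thesis by (rule iso_by_cong[OF _ ws])
qed

lemma refine_term_of_glue:
  assumes H: "is_higraph E" and Ps: "is_path E \<sigma>" and Pr: "is_path E \<rho>"
    and ab: "(a, b) \<in> arrs \<sigma>" and g: "iso_by g (glue \<sigma> (a, b)) \<rho>"
  shows "(g a, lab \<sigma> a, lab \<sigma> b) \<in> refine_terms E \<rho>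
    \<and> cls (refine \<rho> (g a) (lab \<sigma> a) (lab \<sigma> b)) = cls \<sigma>"
proof -
  let ?G = "glue \<sigma> (a, b)"
  let ?K = "alab \<sigma> (a, b)"
  have aG: "a \<in> nodes ?G" using path_arr_ends[OF Ps ab] by (simp add: glue_nodes)
  have K: "snd (lab \<sigma> a) \<inter> fst (lab \<sigma> b) = {?K}" using path_arr_meet[OF Ps ab] .
  have lE: "lab \<sigma> a \<in> E" "lab \<sigma> b \<in> E" using path_lab_in[OF Ps] path_arr_ends[OF Ps ab] by auto
  have lr: "lab \<rho> (g a) = hmerge (lab \<sigma> a) (lab \<sigma> b) ?K"
    using iso_by_lab[OF g aG] by (simp add: glue_lab)
  have c: "iso_by (\<lambda>x. if x = b then Suc (Max (nodes \<rho>)) else g x) \<sigma>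
      (refine \<rho> (g a) (lab \<sigma> a) (lab \<sigma> b))"
    using iso_by_refine_of_glue[OF H Ps path_is_dtree[OF Pr] ab g] .
  have "cls \<sigma> = cls (refine \<rho> (g a) (lab \<sigma> a) (lab \<sigma> b))"
    using iso_by_imp_cls_eq[OF _ c] Ps by (simp add: is_path_def dtree_wf_ptree)
  then show ?thesis
    using iso_by_node[OF g aG] len2_is_path[OF lE K] lr K iso_by_path[OF c Ps]
    by (simp add: refine_terms_def psrc_len2 ptgt_len2 hmerge_def)
qed

lemma glue_of_refine_term:
  assumes Pr: "is_path E \<rho>" and t: "(v, e1, e2) \<in> refine_terms E \<rho>"
    and h: "iso_by h (refine \<rho> v e1 e2) \<sigma>"
  shows "(h v, h (Suc (Max (nodes \<rho>)))) \<in> arrs \<sigma>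
    \<and> iso_by h \<rho> (glue \<sigma> (h v, h (Suc (Max (nodes \<rho>)))))
    \<and> lab \<sigma> (h v) = e1 \<and> lab \<sigma> (h (Suc (Max (nodes \<rho>)))) = e2"
proof -
  let ?yr = "Suc (Max (nodes \<rho>))" and ?R = "refine \<rho> v e1 e2"
  have dr: "is_dtree \<rho>" using Pr by (rule path_is_dtree)
  have v: "v \<in> nodes \<rho>" and RP: "is_path E ?R" using t by (auto simp: refine_terms_def)
  have yrn: "?yr \<notin> nodes \<rho>" using Suc_Max_notin dr by (simp add: is_dtree_def)
  have vy: "(v, ?yr) \<in> arrs ?R" by (simp add: refine_arrs)
  have "iso_by (h \<circ> id) \<rho> (glue \<sigma> (h v, h ?yr))"
    using iso_by_comp[OF glue_refine_inverse[OF dr v refine_terms_lab[OF t]]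
        iso_by_glue[OF path_is_dtree[OF RP] h vy]] .
  moreover have "lab \<sigma> (h v) = e1" "lab \<sigma> (h ?yr) = e2"
    using iso_by_lab[OF h, of v] iso_by_lab[OF h, of ?yr] v yrn by (auto simp: refine_nodes refine_lab)
  ultimately show ?thesis using iso_by_arr[OF h vy] by simp
qed

lemma glue_iso_determines_arr:
  assumes H: "is_higraph E" and Ps: "is_path E \<sigma>" and Pr: "is_path E \<rho>"
    and e: "(a, b) \<in> arrs \<sigma>" and g: "iso_by g (glue \<sigma> (a, b)) \<rho>"
    and e': "(a', b') \<in> arrs \<sigma>" and g': "iso_by g' (glue \<sigma> (a', b')) \<rho>"
    and eqs: "g a = g' a'" "lab \<sigma> a = lab \<sigma> a'" "lab \<sigma> b = lab \<sigma> b'"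
  shows "(a, b) = (a', b')"
proof -
  let ?yr = "Suc (Max (nodes \<rho>))"
  let ?chi = "\<lambda>x. if x = b then ?yr else g x" and ?chi' = "\<lambda>x. if x = b' then ?yr else g' x"
  have yrn: "?yr \<notin> nodes \<rho>" using Suc_Max_notin Pr by (simp add: is_path_def is_dtree_def)
  have abn: "a \<in> nodes \<sigma>" "b \<in> nodes \<sigma>" "a \<noteq> b" using path_arr_ends[OF Ps e] by auto
  have abn': "a' \<in> nodes \<sigma>" "b' \<in> nodes \<sigma>" "a' \<noteq> b'" using path_arr_ends[OF Ps e'] by auto
  have "iso_by ?chi \<sigma> (refine \<rho> (g a) (lab \<sigma> a) (lab \<sigma> b))"
    using iso_by_refine_of_glue[OF H Ps path_is_dtree[OF Pr] e g] .
  moreover have chi': "iso_by ?chi' \<sigma> (refine \<rho> (g a) (lab \<sigma> a) (lab \<sigma> b))"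
    using iso_by_refine_of_glue[OF H Ps path_is_dtree[OF Pr] e' g'] eqs by simp
  ultimately have chi_eq: "\<forall>x\<in>nodes \<sigma>. ?chi x = ?chi' x" using path_iso_unique[OF Ps] by blast
  have "?chi' a = g a" using chi_eq abn by auto
  also have "\<dots> = ?chi' a'" using eqs abn' by simp
  finally have "a = a'" using inj_onD[OF iso_by_inj_on[OF chi']] abn(1) abn'(1) by blast
  moreover have "b = b'"
  proof (rule ccontr)
    assume "b \<noteq> b'"
    then have "g' b = ?yr" using chi_eq abn(2) by auto
    moreover have "b \<in> nodes (glue \<sigma> (a', b'))" using abn(2) \<open>b \<noteq> b'\<close> by (simp add: glue_nodes)
    ultimately show False using iso_by_node[OF g'] yrn by metis
  qed
  ultimately show ?thesis by simp
qed

text \<open>Gluings of \<sigma> isomorphic to \<rho> correspond bijectively to refinements of \<rho> isomorphic to \<sigma>: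
  the arrow (a, b) goes to the node of \<rho> that a and b become, split back into their labels.
  Injectivity rests on paths having no non-trivial automorphisms.\<close>

lemma card_glue_eq_card_refine:
  assumes H: "is_higraph E" and Ps: "is_path E \<sigma>" and Pr: "is_path E \<rho>"
  shows "card {e\<in>arrs \<sigma>. cls (glue \<sigma> e) = cls \<rho>}
       = card {t\<in>refine_terms E \<rho>. cls ((\<lambda>(v, e1, e2). refine \<rho> v e1 e2) t) = cls \<sigma>}"
proof -
  let ?S1 = "{e\<in>arrs \<sigma>. cls (glue \<sigma> e) = cls \<rho>}"
  let ?S2 = "{t\<in>refine_terms E \<rho>. cls ((\<lambda>(v, e1, e2). refine \<rho> v e1 e2) t) = cls \<sigma>}"
  let ?yr = "Suc (Max (nodes \<rho>))"
  define gs where "gs e = (SOME g. iso_by g (glue \<sigma> e) \<rho>)" for e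
  have gs: "iso_by (gs e) (glue \<sigma> e) \<rho>" if "e \<in> ?S1" for e
  proof -
    have "wf_ptree (glue \<sigma> e)"
      using that glue_wf_ptree[OF path_is_dtree[OF Ps]] by (cases e) auto
    moreover have "cls (glue \<sigma> e) = cls \<rho>" using that by simp
    ultimately obtain g where "iso_by g (glue \<sigma> e) \<rho>" by (rule cls_eq_imp_iso_by)
    then show ?thesis unfolding gs_def by (rule someI[where P = "\<lambda>g. iso_by g (glue \<sigma> e) \<rho>"])
  qed
  define Phi where "Phi e = (gs e (fst e), lab \<sigma> (fst e), lab \<sigma> (snd e))" for e
  have "Phi e \<in> ?S2" if "e \<in> ?S1" for e
    using refine_term_of_glue[OF H Ps Pr, of "fst e" "snd e" "gs e"] that gs[OF that]
    by (simp add: Phi_def)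
  moreover have "inj_on Phi ?S1"
  proof (rule inj_onI)
    fix e e' assume e: "e \<in> ?S1" and e': "e' \<in> ?S1" and eq: "Phi e = Phi e'"
    show "e = e'"
      using glue_iso_determines_arr[OF H Ps Pr, of "fst e" "snd e" "gs e" "fst e'" "snd e'" "gs e'"]
        e e' gs[OF e] gs[OF e'] eq by (simp add: Phi_def)
  qed
  moreover have "?S2 \<subseteq> Phi ` ?S1"
  proof
    fix t assume t: "t \<in> ?S2"
    obtain v e1 e2 where tv: "t = (v, e1, e2)" by (cases t) auto
    have rt: "(v, e1, e2) \<in> refine_terms E \<rho>" using t tv by simp
    have "wf_ptree (refine \<rho> v e1 e2)"
      using rt by (simp add: refine_terms_def is_path_def dtree_wf_ptree)
    moreover have "cls (refine \<rho> v e1 e2) = cls \<sigma>" using t tv by simp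
    ultimately obtain h where h: "iso_by h (refine \<rho> v e1 e2) \<sigma>" by (rule cls_eq_imp_iso_by)
    let ?e = "(h v, h ?yr)"
    have e: "?e \<in> arrs \<sigma>" "iso_by h \<rho> (glue \<sigma> ?e)" "lab \<sigma> (h v) = e1" "lab \<sigma> (h ?yr) = e2"
      using glue_of_refine_term[OF Pr rt h] by auto
    have "cls \<rho> = cls (glue \<sigma> ?e)"
      using iso_by_imp_cls_eq[OF _ e(2)] Pr by (simp add: is_path_def dtree_wf_ptree)
    then have eS1: "?e \<in> ?S1" using e(1) by simp
    have "gs ?e (h v) = v"
      using path_automorphism_id[OF Pr iso_by_comp[OF e(2) gs[OF eS1]]] rt
      by (simp add: refine_terms_def)
    then have "Phi ?e = t" using tv e(3,4) by (simp add: Phi_def)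
    then show "t \<in> Phi ` ?S1" using eS1 by blast
  qed
  ultimately have "?S2 = Phi ` ?S1" by blast
  then show ?thesis using card_image[OF \<open>inj_on Phi ?S1\<close>] by simp
qed

section \<open>Gluing twice\<close>

lemma hmerge_assoc:
  assumes H: "is_higraph E" and E: "x \<in> E" "y \<in> E" "z \<in> E"
    and K: "snd x \<inter> fst y = {K}" and L: "snd y \<inter> fst z = {L}"
  shows "hmerge (hmerge x y K) z L = hmerge x (hmerge y z L) K"
proof -
  have h1: "fst x \<inter> (fst y - {K}) = {}" "(snd x - {K}) \<inter> snd y = {}" using higraph_merge[OF H E(1,2) K] by auto
  have h2: "fst y \<inter> (fst z - {L}) = {}" "(snd y - {L}) \<inter> snd z = {}" using higraph_merge[OF H E(2,3) L] by auto
  have k1: "K \<notin> fst z - {L}" using h2(1) K by blast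
  have l1: "L \<notin> snd x - {K}" using h1(2) L by blast
  have "fst x \<union> (fst y - {K}) \<union> (fst z - {L}) = fst x \<union> (fst y \<union> (fst z - {L}) - {K})"
    using k1 by blast
  moreover have "snd x - {K} \<union> snd y - {L} \<union> snd z = snd x - {K} \<union> (snd y - {L} \<union> snd z)"
    using l1 by blast
  ultimately show ?thesis by (simp add: hmerge_def)
qed

lemma hmerge_fork_commute:
  assumes H: "is_higraph E" and E: "x \<in> E" "y \<in> E" "z \<in> E"
    and K: "snd x \<inter> fst y = {K}" and M: "snd x \<inter> fst z = {M}" and KM: "K \<noteq> M"
  shows "hmerge (hmerge x y K) z M = hmerge (hmerge x z M) y K"
proof -
  have h1: "(snd x - {K}) \<inter> snd y = {}" using higraph_merge[OF H E(1,2) K] by auto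
  have h2: "(snd x - {M}) \<inter> snd z = {}" using higraph_merge[OF H E(1,3) M] by auto
  have m1: "M \<notin> snd y" using h1 M KM by blast
  have k1: "K \<notin> snd z" using h2 K KM by blast
  have "fst x \<union> (fst y - {K}) \<union> (fst z - {M}) = fst x \<union> (fst z - {M}) \<union> (fst y - {K})" by blast
  moreover have "snd x - {K} \<union> snd y - {M} \<union> snd z = snd x - {M} \<union> snd z - {K} \<union> snd y"
    using m1 k1 by blast
  ultimately show ?thesis by (simp add: hmerge_def)
qed

lemma hmerge_join_commute:
  assumes H: "is_higraph E" and E: "x \<in> E" "y \<in> E" "z \<in> E"
    and K: "snd x \<inter> fst y = {K}" and L: "snd z \<inter> fst y = {L}" and KL: "K \<noteq> L"
  shows "hmerge z (hmerge x y K) L = hmerge x (hmerge z y L) K"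
proof -
  have h1: "fst x \<inter> (fst y - {K}) = {}" using higraph_merge[OF H E(1,2) K] by auto
  have h2: "fst z \<inter> (fst y - {L}) = {}" using higraph_merge[OF H E(3,2) L] by auto
  have l1: "L \<notin> fst x" using h1 L KL by blast
  have k1: "K \<notin> fst z" using h2 K KL by blast
  have "fst z \<union> (fst x \<union> (fst y - {K}) - {L}) = fst x \<union> (fst z \<union> (fst y - {L}) - {K})"
    using l1 k1 by blast
  moreover have "snd z - {L} \<union> (snd x - {K} \<union> snd y) = snd x - {K} \<union> (snd z - {L} \<union> snd y)" by blast
  ultimately show ?thesis by (simp add: hmerge_def)
qed

definition glue_node :: "nat \<Rightarrow> nat \<Rightarrow> nat \<Rightarrow> nat" where
  "glue_node a b z = (if z = b then a else z)"

lemma glue_arrs_glue_node: "arrs (glue T (a, b)) = (\<lambda>(x, y). (glue_node a b x, glue_node a b y)) ` (arrs T - {(a, b)})"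
  unfolding glue_arrs glue_node_def ..

lemma iso_by_common_quotient:
  assumes N1: "nodes G1 = s1 ` N" and N2: "nodes G2 = s2 ` N"
    and A1: "arrs G1 = (\<lambda>(x, y). (s1 x, s1 y)) ` A" and A2: "arrs G2 = (\<lambda>(x, y). (s2 x, s2 y)) ` A"
    and phi: "\<forall>x\<in>N. phi (s1 x) = s2 x" and inj: "inj_on phi (nodes G1)"
    and L: "\<forall>x\<in>N. lab G2 (s2 x) = lab G1 (s1 x)" and AN: "A \<subseteq> N \<times> N"
  shows "iso_by phi G1 G2"
proof -
  have "phi ` nodes G1 = nodes G2" unfolding N1 N2 image_image using phi by (auto simp: image_iff)
  then have b: "bij_betw phi (nodes G1) (nodes G2)" using inj by (simp add: bij_betw_def)
  have "(\<lambda>(x, y). (phi x, phi y)) ` arrs G1 = (\<lambda>u. (phi (s1 (fst u)), phi (s1 (snd u)))) ` A"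
    unfolding A1 image_image by (simp add: case_prod_beta)
  also have "\<dots> = (\<lambda>u. (s2 (fst u), s2 (snd u))) ` A"
    by (rule image_cong[OF refl]) (use phi AN in auto)
  also have "\<dots> = arrs G2" unfolding A2 by (simp add: case_prod_beta)
  finally have a: "arrs G2 = (\<lambda>(x, y). (phi x, phi y)) ` arrs G1" by simp
  have l: "\<forall>z\<in>nodes G1. lab G2 (phi z) = lab G1 z"
  proof
    fix z assume "z \<in> nodes G1"
    then obtain x where x: "x \<in> N" "z = s1 x" unfolding N1 by blast
    then show "lab G2 (phi z) = lab G1 z" using phi L by simp
  qed
  show ?thesis using b a l by (simp add: iso_by_def)
qed

context
  fixes E :: "'v hedge set" and T :: "'v ptree" and a b c d :: nat
  assumes H: "is_higraph E" and P: "is_path E T" and e: "(a, b) \<in> arrs T"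
    and e': "(c, d) \<in> arrs T" and ne: "(a, b) \<noteq> (c, d)"
begin

lemma glue_glue_arr: "(glue_node a b c, glue_node a b d) \<in> arrs (glue T (a, b))"
  using glue_arrI[OF H P e e' ne[symmetric]] by (simp add: glue_node_def)

lemma glue_glue_nodes:
  "nodes (glue (glue T (a, b)) (glue_node a b c, glue_node a b d)) = (\<lambda>x. glue_node (glue_node a b c) (glue_node a b d) (glue_node a b x)) ` nodes T"
proof -
  have ab: "a \<in> nodes T" "a \<noteq> b" using path_arr_ends[OF P e] by auto
  have cn: "c \<in> nodes T" using path_arr_nodes[OF P e'] by auto
  have cdA: "(c, d) \<in> arrs T - {(a, b)}" using e' ne by auto
  have nl: "glue_node a b c \<noteq> glue_node a b d" unfolding glue_node_def by (rule glue_rename_no_loop[OF H P e cdA])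
  show ?thesis
  proof
    show "nodes (glue (glue T (a, b)) (glue_node a b c, glue_node a b d)) \<subseteq> (\<lambda>x. glue_node (glue_node a b c) (glue_node a b d) (glue_node a b x)) ` nodes T"
    proof
      fix z assume "z \<in> nodes (glue (glue T (a, b)) (glue_node a b c, glue_node a b d))"
      then have z: "z \<in> nodes T" "z \<noteq> b" "z \<noteq> glue_node a b d" by (auto simp: glue_nodes)
      then have "glue_node (glue_node a b c) (glue_node a b d) (glue_node a b z) = z" by (simp add: glue_node_def)
      then show "z \<in> (\<lambda>x. glue_node (glue_node a b c) (glue_node a b d) (glue_node a b x)) ` nodes T"
        using z(1) by (intro rev_image_eqI[of z]) auto
    qed
  next
    show "(\<lambda>x. glue_node (glue_node a b c) (glue_node a b d) (glue_node a b x)) ` nodes T \<subseteq> nodes (glue (glue T (a, b)) (glue_node a b c, glue_node a b d))"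
    proof
      fix z assume "z \<in> (\<lambda>x. glue_node (glue_node a b c) (glue_node a b d) (glue_node a b x)) ` nodes T"
      then obtain x where x: "x \<in> nodes T" "z = glue_node (glue_node a b c) (glue_node a b d) (glue_node a b x)" by blast
      have rx: "glue_node a b x \<in> nodes T" "glue_node a b x \<noteq> b" using x ab by (auto simp: glue_node_def)
      have rc: "glue_node a b c \<in> nodes T" "glue_node a b c \<noteq> b" using cn ab by (auto simp: glue_node_def)
      show "z \<in> nodes (glue (glue T (a, b)) (glue_node a b c, glue_node a b d))"
        using x(2) rx rc nl by (auto simp: glue_nodes glue_node_def)
    qed
  qed
qed

lemma glue_glue_arrs:
  "arrs (glue (glue T (a, b)) (glue_node a b c, glue_node a b d))
     = (\<lambda>(x, y). (glue_node (glue_node a b c) (glue_node a b d) (glue_node a b x), glue_node (glue_node a b c) (glue_node a b d) (glue_node a b y))) ` (arrs T - {(a, b), (c, d)})"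
proof -
  let ?r = "\<lambda>(x, y). (glue_node a b x, glue_node a b y)"
  let ?r2 = "\<lambda>(x, y). (glue_node (glue_node a b c) (glue_node a b d) x, glue_node (glue_node a b c) (glue_node a b d) y)"
  have inj: "inj_on ?r (arrs T - {(a, b)})" using inj_on_glue_rename[OF H P e] by (simp add: glue_node_def)
  have "arrs (glue T (a, b)) - {(glue_node a b c, glue_node a b d)} = ?r ` (arrs T - {(a, b)}) - ?r ` {(c, d)}"
    by (simp add: glue_arrs_glue_node)
  also have "\<dots> = ?r ` (arrs T - {(a, b)} - {(c, d)})"
    by (rule inj_on_image_set_diff[OF inj, symmetric]) (use e' ne in auto)
  finally have X: "arrs (glue T (a, b)) - {(glue_node a b c, glue_node a b d)} = ?r ` (arrs T - {(a, b), (c, d)})"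
    by (simp add: insert_commute Diff_insert2[symmetric])
  show ?thesis
    unfolding glue_arrs_glue_node[of "glue T (a, b)"] X image_image by (simp add: case_prod_beta)
qed

lemma glue_glue_lab:
  "lab (glue (glue T (a, b)) (glue_node a b c, glue_node a b d)) z
     = (if z = glue_node a b c then hmerge (lab (glue T (a, b)) (glue_node a b c)) (lab (glue T (a, b)) (glue_node a b d)) (alab T (c, d))
        else lab (glue T (a, b)) z)"
proof -
  have "alab (glue T (a, b)) (glue_node a b c, glue_node a b d) = alab T (c, d)"
    using glue_alab[OF H P e e' ne[symmetric]] by (simp add: glue_node_def)
  then show ?thesis by (simp add: glue_lab)
qed

end

lemma glue_glue_iso:
  assumes H: "is_higraph E" and P: "is_path E T" and e: "(a, b) \<in> arrs T"
    and e': "(c, d) \<in> arrs T" and ne: "(a, b) \<noteq> (c, d)"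
    and s: "\<forall>x\<in>nodes T. \<phi> (glue_node (glue_node a b c) (glue_node a b d) (glue_node a b x))
                          = glue_node (glue_node c d a) (glue_node c d b) (glue_node c d x)"
    and inj: "inj_on \<phi> (nodes (glue (glue T (a, b)) (glue_node a b c, glue_node a b d)))"
    and l: "\<forall>x\<in>nodes T.
      lab (glue (glue T (c, d)) (glue_node c d a, glue_node c d b))
          (glue_node (glue_node c d a) (glue_node c d b) (glue_node c d x))
      = lab (glue (glue T (a, b)) (glue_node a b c, glue_node a b d))
          (glue_node (glue_node a b c) (glue_node a b d) (glue_node a b x))"
  shows "ptree_iso (glue (glue T (a, b)) (glue_node a b c, glue_node a b d))
                   (glue (glue T (c, d)) (glue_node c d a, glue_node c d b))"
proof -
  have ne': "(c, d) \<noteq> (a, b)" using ne by auto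
  have "arrs T - {(a, b), (c, d)} \<subseteq> nodes T \<times> nodes T" using P by (auto simp: is_path_def is_dtree_def)
  then show ?thesis
    using iso_by_common_quotient[OF glue_glue_nodes[OF H P e e' ne] glue_glue_nodes[OF H P e' e ne']
        glue_glue_arrs[OF H P e e' ne] glue_glue_arrs[OF H P e' e ne', unfolded insert_commute] s inj l]
    unfolding ptree_iso_iff by blast
qed

lemma glue_glue_commute:
  assumes H: "is_higraph E" and P: "is_path E T" and e: "(a, b) \<in> arrs T"
    and e': "(c, d) \<in> arrs T" and ne: "(a, b) \<noteq> (c, d)"
  shows "ptree_iso (glue (glue T (a, b)) (glue_node a b c, glue_node a b d)) (glue (glue T (c, d)) (glue_node c d a, glue_node c d b))"
proof -
  let ?G1 = "glue (glue T (a, b)) (glue_node a b c, glue_node a b d)"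
  let ?G2 = "glue (glue T (c, d)) (glue_node c d a, glue_node c d b)"
  let ?s1 = "\<lambda>x. glue_node (glue_node a b c) (glue_node a b d) (glue_node a b x)"
  let ?s2 = "\<lambda>x. glue_node (glue_node c d a) (glue_node c d b) (glue_node c d x)"
  have ne': "(c, d) \<noteq> (a, b)" using ne by auto
  have L1: "\<And>z. lab ?G1 z = (if z = glue_node a b c then hmerge (lab (glue T (a, b)) (glue_node a b c)) (lab (glue T (a, b)) (glue_node a b d)) (alab T (c, d))
        else lab (glue T (a, b)) z)" using glue_glue_lab[OF H P e e' ne] .
  have L2: "\<And>z. lab ?G2 z = (if z = glue_node c d a then hmerge (lab (glue T (c, d)) (glue_node c d a)) (lab (glue T (c, d)) (glue_node c d b)) (alab T (a, b))
        else lab (glue T (c, d)) z)" using glue_glue_lab[OF H P e' e ne'] .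
  have ab: "a \<in> nodes T" "b \<in> nodes T" "a \<noteq> b" using path_arr_ends[OF P e] by auto
  have cd: "c \<in> nodes T" "d \<in> nodes T" "c \<noteq> d" using path_arr_ends[OF P e'] by auto
  have ba: "(b, a) \<noteq> (c, d)" using path_no_2cycle[OF P e] e' by auto
  have labE: "\<And>x. x \<in> nodes T \<Longrightarrow> lab T x \<in> E" using path_lab_in[OF P] .
  have sK: "snd (lab T a) \<inter> fst (lab T b) = {alab T (a, b)}" using path_arr_meet[OF P e] .
  have sL: "snd (lab T c) \<inter> fst (lab T d) = {alab T (c, d)}" using path_arr_meet[OF P e'] .
  have lab_ab: "\<And>z. lab (glue T (a, b)) z = (if z = a then hmerge (lab T a) (lab T b) (alab T (a, b)) else lab T z)"
    by (rule glue_lab)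
  have lab_cd: "\<And>z. lab (glue T (c, d)) z = (if z = c then hmerge (lab T c) (lab T d) (alab T (c, d)) else lab T z)"
    by (rule glue_lab)
  \<comment> \<open>disjoint arrows, the two chains, a common tail, a common head; only in the last case
    do the glued nodes carry different names\<close>
  consider (C1) "a \<noteq> c" "a \<noteq> d" "b \<noteq> c" "b \<noteq> d"
    | (C2) "b = c" | (C3) "a = d" | (C4) "a = c" | (C5) "b = d" by blast
  then show ?thesis
  proof cases
    case C1
    have s: "\<forall>x\<in>nodes T. id (?s1 x) = ?s2 x" using C1 by (auto simp: glue_node_def)
    have l: "\<forall>x\<in>nodes T. lab ?G2 (?s2 x) = lab ?G1 (?s1 x)"
      unfolding L1 L2 lab_ab lab_cd using C1 ab cd by (auto simp: glue_node_def)
    show ?thesis using glue_glue_iso[OF H P e e' ne s _ l] by simp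
  next
    case C2
    have ad: "a \<noteq> d" using C2 ba by auto
    have bd: "b \<noteq> d" using C2 cd by auto
    have s: "\<forall>x\<in>nodes T. id (?s1 x) = ?s2 x" using C2 ad bd ab by (auto simp: glue_node_def)
    have m: "hmerge (hmerge (lab T a) (lab T b) (alab T (a, b))) (lab T d) (alab T (b, d))
           = hmerge (lab T a) (hmerge (lab T b) (lab T d) (alab T (b, d))) (alab T (a, b))"
      using hmerge_assoc[OF H labE[OF ab(1)] labE[OF ab(2)] labE[OF cd(2)] sK] sL C2 by simp
    have l: "\<forall>x\<in>nodes T. lab ?G2 (?s2 x) = lab ?G1 (?s1 x)"
      unfolding L1 L2 lab_ab lab_cd using C2 ad bd ab cd m by (auto simp: glue_node_def)
    show ?thesis using glue_glue_iso[OF H P e e' ne s _ l] by simp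
  next
    case C3
    have bc: "b \<noteq> c" using C3 ba by auto
    have bd: "b \<noteq> d" using C3 ab by auto
    have s: "\<forall>x\<in>nodes T. id (?s1 x) = ?s2 x" using C3 bc bd cd by (auto simp: glue_node_def)
    have m: "hmerge (hmerge (lab T c) (lab T a) (alab T (c, a))) (lab T b) (alab T (a, b))
           = hmerge (lab T c) (hmerge (lab T a) (lab T b) (alab T (a, b))) (alab T (c, a))"
      using hmerge_assoc[OF H labE[OF cd(1)] labE[OF ab(1)] labE[OF ab(2)] _ sK] sL C3 by simp
    have l: "\<forall>x\<in>nodes T. lab ?G2 (?s2 x) = lab ?G1 (?s1 x)"
      unfolding L1 L2 lab_ab lab_cd using C3 bc bd ab cd m by (auto simp: glue_node_def)
    show ?thesis using glue_glue_iso[OF H P e e' ne s _ l] by simp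
  next
    case C4
    have bd: "b \<noteq> d" using C4 ne by auto
    have KM: "alab T (a, b) \<noteq> alab T (a, d)" using path_alab_out_distinct[OF P e] e' C4 bd by simp
    have s: "\<forall>x\<in>nodes T. id (?s1 x) = ?s2 x" using C4 bd ab cd by (auto simp: glue_node_def)
    have m: "hmerge (hmerge (lab T a) (lab T b) (alab T (a, b))) (lab T d) (alab T (a, d))
           = hmerge (hmerge (lab T a) (lab T d) (alab T (a, d))) (lab T b) (alab T (a, b))"
      using hmerge_fork_commute[OF H labE[OF ab(1)] labE[OF ab(2)] labE[OF cd(2)] sK _ KM] sL C4 by simp
    have l: "\<forall>x\<in>nodes T. lab ?G2 (?s2 x) = lab ?G1 (?s1 x)"
      unfolding L1 L2 lab_ab lab_cd using C4 bd ab cd m by (auto simp: glue_node_def)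
    show ?thesis using glue_glue_iso[OF H P e e' ne s _ l] by simp
  next
    case C5
    have ac: "a \<noteq> c" using C5 ne by auto
    have KL: "alab T (a, b) \<noteq> alab T (c, b)" using path_alab_in_distinct[OF P e] e' C5 ac by simp
    let ?phi = "\<lambda>z. if z = c then a else z"
    have s: "\<forall>x\<in>nodes T. ?phi (?s1 x) = ?s2 x" using C5 ac ab cd by (auto simp: glue_node_def)
    have aN: "a \<notin> nodes ?G1" using C5 by (simp add: glue_nodes glue_node_def)
    have inj: "inj_on ?phi (nodes ?G1)" using aN by (auto simp: inj_on_def)
    have m: "hmerge (lab T c) (hmerge (lab T a) (lab T b) (alab T (a, b))) (alab T (c, b))
           = hmerge (lab T a) (hmerge (lab T c) (lab T b) (alab T (c, b))) (alab T (a, b))"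
      using hmerge_join_commute[OF H labE[OF ab(1)] labE[OF ab(2)] labE[OF cd(1)] sK _ KL] sL C5 by simp
    have l: "\<forall>x\<in>nodes T. lab ?G2 (?s2 x) = lab ?G1 (?s1 x)"
      unfolding L1 L2 lab_ab lab_cd using C5 ac ab cd m by (auto simp: glue_node_def)
    show ?thesis using glue_glue_iso[OF H P e e' ne s inj l] .
  qed
qed


lemma sum_card_glue_glue_eq_card_pairs:
  assumes H: "is_higraph E" and P: "is_path E T"
  shows "(\<Sum>e\<in>arrs T. card {u\<in>arrs (glue T e). cls (glue (glue T e) u) = C})
    = card {(e, e'). e \<in> arrs T \<and> e' \<in> arrs T \<and> e' \<noteq> e \<and>
        cls (glue (glue T e) (glue_node (fst e) (snd e) (fst e'), glue_node (fst e) (snd e) (snd e'))) = C}"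
proof -
  have d: "is_dtree T" using P by (rule path_is_dtree)
  have fN: "finite (nodes T)" using d by (simp add: is_dtree_def)
  have fA: "finite (arrs T)" using wf_ptree_finite_arrs[OF dtree_wf_ptree[OF d] fN] .
  have fAG: "finite (arrs (glue T e))" for e
    by (simp add: glue_arrs_glue_node[of T "fst e" "snd e", simplified] fA)
  let ?Q = "SIGMA e:arrs T. {u\<in>arrs (glue T e). cls (glue (glue T e) u) = C}"
  have sQ: "(\<Sum>e\<in>arrs T. card {u\<in>arrs (glue T e). cls (glue (glue T e) u) = C}) = card ?Q"
    using fA fAG by (simp add: card_SigmaI)
  let ?psi = "\<lambda>(e, e'). (e, (glue_node (fst e) (snd e) (fst e'), glue_node (fst e) (snd e) (snd e')))"
  let ?P = "{(e, e'). e \<in> arrs T \<and> e' \<in> arrs T \<and> e' \<noteq> e \<and>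
              cls (glue (glue T e) (glue_node (fst e) (snd e) (fst e'), glue_node (fst e) (snd e) (snd e'))) = C}"
  have inj: "inj_on ?psi ?P"
  proof (rule inj_onI)
    fix p q assume p: "p \<in> ?P" and q: "q \<in> ?P" and eq: "?psi p = ?psi q"
    obtain e e' where pe: "p = (e, e')" by (cases p) blast
    obtain f f' where qf: "q = (f, f')" by (cases q) blast
    have ef: "e = f" using eq pe qf by simp
    obtain a b where ab: "e = (a, b)" by fastforce
    have eA: "(a, b) \<in> arrs T" using p pe ab by simp
    have i: "inj_on (\<lambda>(x, y). (glue_node a b x, glue_node a b y)) (arrs T - {(a, b)})"
      using inj_on_glue_rename[OF H P eA] by (simp add: glue_node_def)
    have "e' \<in> arrs T - {(a, b)}" "f' \<in> arrs T - {(a, b)}" using p q pe qf ab ef by auto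
    moreover have "(\<lambda>(x, y). (glue_node a b x, glue_node a b y)) e' = (\<lambda>(x, y). (glue_node a b x, glue_node a b y)) f'"
    proof -
      have eq2: "?psi (e, e') = ?psi (e, f')" using eq pe qf ef by simp
      then show ?thesis unfolding ab by (simp add: case_prod_beta)
    qed
    ultimately have "e' = f'" using inj_onD[OF i] by blast
    then show "p = q" using pe qf ef by simp
  qed
  have img: "?psi ` ?P = ?Q"
  proof
    show "?psi ` ?P \<subseteq> ?Q"
    proof
      fix q assume "q \<in> ?psi ` ?P"
      then obtain e e' where p: "(e, e') \<in> ?P" "q = ?psi (e, e')" by blast
      obtain a b where ab: "e = (a, b)" by fastforce
      obtain c d where cd: "e' = (c, d)" by fastforce
      have "(glue_node a b c, glue_node a b d) \<in> arrs (glue T (a, b))"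
        using glue_glue_arr[of E T a b c d] H P p ab cd by auto
      then show "q \<in> ?Q" using p ab cd by auto
    qed
  next
    show "?Q \<subseteq> ?psi ` ?P"
    proof
      fix q assume q: "q \<in> ?Q"
      obtain e u where eu: "q = (e, u)" by (cases q) blast
      obtain a b where ab: "e = (a, b)" by fastforce
      have eA: "(a, b) \<in> arrs T" and uA: "u \<in> arrs (glue T (a, b))"
        and cl: "cls (glue (glue T (a, b)) u) = C" using q eu ab by auto
      obtain c d where cd: "(c, d) \<in> arrs T - {(a, b)}" "u = (glue_node a b c, glue_node a b d)"
        using uA unfolding glue_arrs_glue_node by auto
      have c1: "(c, d) \<in> arrs T" "(c, d) \<noteq> (a, b)" using cd(1) by auto
      have c2: "cls (glue (glue T (a, b)) (glue_node a b c, glue_node a b d)) = C" using cl cd(2) by simp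
      have m1: "((a, b), (c, d)) \<in> ?P" using eA c1 c2 by simp
      have m2: "?psi ((a, b), (c, d)) = q" using eu ab cd by simp
      show "q \<in> ?psi ` ?P" using rev_image_eqI[where f="?psi", OF m1 m2[symmetric]] .
    qed
  qed
  have "card ?Q = card ?P" using card_image[OF inj] img by simp
  then show ?thesis using sQ by simp
qed

text \<open>Gluing two distinct arrows in either order gives isomorphic paths, so swapping the two
  arrows is a fixpoint-free involution on the ordered pairs of arrows whose double gluing lies in a
  given class.\<close>

lemma even_card_glue_glue:
  assumes H: "is_higraph E" and P: "is_path E T"
  shows "even (\<Sum>e\<in>arrs T. card {u\<in>arrs (glue T e). cls (glue (glue T e) u) = C})"
proof -
  let ?P = "{(e, e'). e \<in> arrs T \<and> e' \<in> arrs T \<and> e' \<noteq> e \<and>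
              cls (glue (glue T e) (glue_node (fst e) (snd e) (fst e'), glue_node (fst e) (snd e) (snd e'))) = C}"
  let ?sw = "\<lambda>(e, e'). (e', e)"
  have swP: "\<forall>p\<in>?P. ?sw p \<in> ?P"
  proof
    fix p assume p: "p \<in> ?P"
    obtain a b c d where pe: "p = ((a, b), (c, d))" by (metis prod.collapse)
    have e: "(a, b) \<in> arrs T" and e': "(c, d) \<in> arrs T" and ne: "(a, b) \<noteq> (c, d)"
      and cl: "cls (glue (glue T (a, b)) (glue_node a b c, glue_node a b d)) = C" using p pe by auto
    have iso: "ptree_iso (glue (glue T (a, b)) (glue_node a b c, glue_node a b d)) (glue (glue T (c, d)) (glue_node c d a, glue_node c d b))"
      using glue_glue_commute[OF H P e e' ne] .
    have GP: "is_path E (glue T (a, b))" using glue_path[OF H P e] .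
    have GGP: "is_path E (glue (glue T (a, b)) (glue_node a b c, glue_node a b d))"
      using glue_path[OF H GP glue_glue_arr[OF H P e e' ne]] .
    have w: "wf_ptree (glue (glue T (a, b)) (glue_node a b c, glue_node a b d))" using dtree_wf_ptree[OF path_is_dtree[OF GGP]] .
    have "cls (glue (glue T (a, b)) (glue_node a b c, glue_node a b d)) = cls (glue (glue T (c, d)) (glue_node c d a, glue_node c d b))"
      using cls_eq_iff[OF w] iso by blast
    then have "cls (glue (glue T (c, d)) (glue_node c d a, glue_node c d b)) = C" using cl by simp
    then show "?sw p \<in> ?P" using pe e e' ne by auto
  qed
  have "even (card ?P)"
  proof (rule even_card_involution[where f = ?sw])
    show "?sw p \<in> ?P" if "p \<in> ?P" for p using swP that by (rule bspec)
    show "?sw (?sw p) = p" for p by (cases p) simp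
    show "?sw p \<noteq> p" if "p \<in> ?P" for p using that by (cases p) auto
  qed
  then show ?thesis using sum_card_glue_glue_eq_card_pairs[OF H P] by simp
qed


section \<open>The path DGA\<close>

lemma rep_path:
  assumes "D \<in> paths E"
  shows "is_path E (rep D) \<and> cls (rep D) = D"
proof -
  obtain T0 where T0: "D = cls T0" "is_path E T0" using assms by (auto simp: paths_def)
  have i: "ptree_iso T0 (rep (cls T0))" by (rule ptree_iso_rep_cls)
  have w: "wf_ptree T0" using T0(2) by (simp add: is_path_def dtree_wf_ptree)
  have "cls T0 = cls (rep (cls T0))" using cls_eq_iff[OF w] i by blast
  then show ?thesis using T0 ptree_iso_path[OF i T0(2)] by simp
qed

lemma cls_in_paths: "is_path E T \<Longrightarrow> cls T \<in> paths E"
  by (auto simp: paths_def)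

lemma bdry_tree_subset_paths:
  assumes H: "is_higraph E" and P: "is_path E T"
  shows "bdry_tree T \<subseteq> paths E"
proof
  fix C assume "C \<in> bdry_tree T"
  then have "C \<in> cls ` glue T ` arrs T" using f2sum_subset unfolding bdry_tree_def by blast
  then obtain e where e: "e \<in> arrs T" "C = cls (glue T e)" by blast
  obtain a b where ab: "e = (a, b)" by (cases e) blast
  have "is_path E (glue T (a, b))" using glue_path[OF H P] e ab by simp
  then show "C \<in> paths E" using e ab cls_in_paths by simp
qed

lemma finite_bdry_tree:
  assumes "is_dtree T"
  shows "finite (bdry_tree T)"
proof -
  have "finite (arrs T)" using wf_ptree_finite_arrs[OF dtree_wf_ptree[OF assms]] assms by (simp add: is_dtree_def)
  then show ?thesis unfolding bdry_tree_def by (rule finite_f2sum)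
qed

lemma delta_tree_subset_paths: "delta_tree E T \<subseteq> paths E"
proof
  fix C assume "C \<in> delta_tree E T"
  then have "C \<in> cls ` (\<lambda>(v, e1, e2). refine T v e1 e2) ` refine_terms E T"
    using f2sum_subset unfolding delta_tree_def by blast
  then obtain t where t: "t \<in> refine_terms E T" "C = cls ((\<lambda>(v, e1, e2). refine T v e1 e2) t)" by blast
  obtain v e1 e2 where tv: "t = (v, e1, e2)" by (cases t) blast
  have "is_path E (refine T v e1 e2)" using t tv by (simp add: refine_terms_def)
  then show "C \<in> paths E" using t tv cls_in_paths by simp
qed

lemma finite_delta_tree:
  assumes "finite E" "is_dtree T"
  shows "finite (delta_tree E T)"
proof -
  have "refine_terms E T \<subseteq> nodes T \<times> E \<times> E"
    by (auto simp: refine_terms_def is_path_def len2_def)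
  moreover have "finite (nodes T \<times> E \<times> E)" using assms by (simp add: is_dtree_def)
  ultimately have "finite (refine_terms E T)" by (rule finite_subset)
  then show ?thesis unfolding delta_tree_def by (rule finite_f2sum)
qed

lemma bdry_tree_iff_delta_tree:
  assumes H: "is_higraph E" and D: "D \<in> paths E" and C: "C \<in> paths E"
  shows "C \<in> bdry_tree (rep D) \<longleftrightarrow> D \<in> delta_tree E (rep C)"
proof -
  have s: "is_path E (rep D)" "cls (rep D) = D" using rep_path[OF D] by auto
  have r: "is_path E (rep C)" "cls (rep C) = C" using rep_path[OF C] by auto
  have "card {e\<in>arrs (rep D). cls (glue (rep D) e) = cls (rep C)}
       = card {t\<in>refine_terms E (rep C). cls ((\<lambda>(v, e1, e2). refine (rep C) v e1 e2) t) = cls (rep D)}"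
    using card_glue_eq_card_refine[OF H s(1) r(1)] .
  then show ?thesis using s(2) r(2) by (simp add: bdry_tree_def delta_tree_def f2sum_mem)
qed

lemma bdry_tree_rep_cls_glue:
  assumes H: "is_higraph E" and P: "is_path E T" and e: "e \<in> arrs T"
  shows "bdry_tree (rep (cls (glue T e))) = bdry_tree (glue T e)"
proof -
  obtain a b where ab: "e = (a, b)" by (cases e) blast
  have d: "is_dtree (glue T e)" using glue_dtree[OF H P] e ab by simp
  obtain f where "iso_by f (glue T e) (rep (cls (glue T e)))"
    using ptree_iso_rep_cls[of "glue T e"] unfolding ptree_iso_iff by blast
  then show ?thesis using bdry_tree_iso_invariant[OF d] by blast
qed

lemma even_card_bdry_bdry_tree:
  assumes H: "is_higraph E" and P: "is_path E T"
  shows "even (card {B\<in>bdry_tree T. C \<in> bdry_tree (rep B)})"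
proof -
  have d: "is_dtree T" using P by (rule path_is_dtree)
  have fA: "finite (arrs T)" using wf_ptree_finite_arrs[OF dtree_wf_ptree[OF d]] d by (simp add: is_dtree_def)
  let ?h = "\<lambda>e. card {u\<in>arrs (glue T e). cls (glue (glue T e) u) = C}"
  have "odd (card {B\<in>bdry_tree T. C \<in> bdry_tree (rep B)})
     \<longleftrightarrow> odd (card {e\<in>arrs T. C \<in> bdry_tree (rep (cls (glue T e)))})"
    unfolding bdry_tree_def[of T]
    using odd_card_f2sum_filter[OF fA, where g="glue T" and P="\<lambda>B. C \<in> bdry_tree (rep B)"] by simp
  also have "{e\<in>arrs T. C \<in> bdry_tree (rep (cls (glue T e)))} = {e\<in>arrs T. odd (?h e)}"
  proof -
    have "\<And>e. e \<in> arrs T \<Longrightarrow> C \<in> bdry_tree (rep (cls (glue T e))) \<longleftrightarrow> odd (?h e)"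
      using bdry_tree_rep_cls_glue[OF H P] by (simp add: bdry_tree_def[of "glue T _"] f2sum_mem)
    then show ?thesis by blast
  qed
  also have "odd (card {e\<in>arrs T. odd (?h e)}) \<longleftrightarrow> odd (\<Sum>e\<in>arrs T. ?h e)"
    using fA by (simp add: even_sum_iff)
  finally show ?thesis using even_card_glue_glue[OF H P] by simp
qed

lemma bdry_singleton: "bdry {C} = bdry_tree (rep C)"
proof -
  have "{D \<in> {C}. X \<in> bdry_tree (rep D)} = (if X \<in> bdry_tree (rep C) then {C} else {})" for X
    by auto
  then show ?thesis by (auto simp: bdry_def lin_mem split: if_splits)
qed

lemma delta_in_pathDGA:
  assumes "finite E" "a \<in> pathDGA E"
  shows "delta E a \<in> pathDGA E"
proof -
  have sub: "delta E a \<subseteq> (\<Union>D\<in>a. delta_tree E (rep D))"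
    unfolding delta_def by (rule lin_subset)
  moreover have "finite (delta_tree E (rep D))" if "D \<in> a" for D
    using finite_delta_tree[OF assms(1) path_is_dtree] rep_path[of D E] that assms(2)
    by (auto simp: pathDGA_def)
  moreover have "delta E a \<subseteq> paths E" using sub delta_tree_subset_paths by blast
  ultimately show ?thesis using assms(2) finite_subset[OF sub] by (auto simp: pathDGA_def)
qed

lemma pairing_bdry_delta:
  assumes H: "is_higraph E" and fE: "finite E" and a: "a \<in> pathDGA E" and b: "b \<in> pathDGA E"
  shows "pairing (bdry a) b = pairing a (delta E b)"
proof -
  let ?F = "\<lambda>C. bdry_tree (rep C)" and ?G = "\<lambda>C. delta_tree E (rep C)"
  have fa: "finite a" "a \<subseteq> paths E" and fb: "finite b" "b \<subseteq> paths E"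
    using a b by (auto simp: pathDGA_def)
  have fF: "finite (?F D)" if "D \<in> a" for D
    using finite_bdry_tree rep_path path_is_dtree that fa by blast
  have fG: "finite (?G D)" if "D \<in> b" for D
    using finite_delta_tree[OF fE] rep_path path_is_dtree that fb by blast
  have "pairing (bdry a) b \<longleftrightarrow> odd (card {C\<in>lin ?F a. C \<in> b})"
    unfolding pairing_def bdry_def by (simp add: Int_def)
  also have "\<dots> \<longleftrightarrow> odd (\<Sum>D\<in>a. card {C\<in>?F D. C \<in> b})"
    using odd_card_lin_filter[OF fa(1) fF] .
  also have "(\<Sum>D\<in>a. card {C\<in>?F D. C \<in> b}) = (\<Sum>D\<in>a. card {C\<in>b. C \<in> ?F D})"
    by (rule sum.cong) (auto intro: arg_cong[where f=card])
  also have "\<dots> = (\<Sum>C\<in>b. card {D\<in>a. C \<in> ?F D})"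
    using sum_card_filter_swap[OF fa(1) fb(1)] .
  also have "\<dots> = (\<Sum>C\<in>b. card {D\<in>?G C. D \<in> a})"
    using bdry_tree_iff_delta_tree[OF H] fa fb by (intro sum.cong refl arg_cong[where f = card]) blast
  also have "odd \<dots> \<longleftrightarrow> odd (card {D\<in>lin ?G b. D \<in> a})"
    using odd_card_lin_filter[OF fb(1) fG] by simp
  also have "\<dots> \<longleftrightarrow> pairing a (delta E b)"
    unfolding pairing_def delta_def by (simp add: Int_def conj_commute)
  finally show ?thesis .
qed

lemma bdry_bdry_eq_empty:
  assumes H: "is_higraph E" and a: "a \<in> pathDGA E"
  shows "bdry (bdry a) = {}"
proof -
  let ?F = "\<lambda>C. bdry_tree (rep C)"
  have fa: "finite a" "a \<subseteq> paths E" using a by (auto simp: pathDGA_def)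
  have fF: "finite (?F D)" if "D \<in> a" for D
    using finite_bdry_tree rep_path path_is_dtree that fa by blast
  have "C \<notin> lin ?F (lin ?F a)" for C
  proof -
    have "C \<in> lin ?F (lin ?F a) \<longleftrightarrow> odd (\<Sum>D\<in>a. card {B\<in>?F D. C \<in> ?F B})"
      using odd_card_lin_filter[OF fa(1) fF] by (simp add: lin_mem)
    moreover have "even (\<Sum>D\<in>a. card {B\<in>?F D. C \<in> ?F B})"
      using even_card_bdry_bdry_tree[OF H] rep_path fa by (intro dvd_sum) blast
    ultimately show ?thesis by simp
  qed
  then show ?thesis unfolding bdry_def by blast
qed

text \<open>Nilpotency of \<delta> is dual to that of \<partial>: a basis path C occurs in \<delta>(\<delta> a) exactly when
  the pairing of \<partial>(\<partial>{C}) with a is odd.\<close>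

lemma delta_delta_eq_empty:
  assumes H: "is_higraph E" and fE: "finite E" and a: "a \<in> pathDGA E"
  shows "delta E (delta E a) = {}"
proof (rule ccontr)
  assume "delta E (delta E a) \<noteq> {}"
  then obtain C where C: "C \<in> delta E (delta E a)" by blast
  have da: "delta E a \<in> pathDGA E" and dda: "delta E (delta E a) \<in> pathDGA E"
    using delta_in_pathDGA[OF fE] a by blast+
  then have Cp: "C \<in> paths E" using C by (auto simp: pathDGA_def)
  then have c: "{C} \<in> pathDGA E" by (simp add: pathDGA_def)
  have bc: "bdry {C} \<in> pathDGA E"
    using rep_path[OF Cp] finite_bdry_tree[OF path_is_dtree] bdry_tree_subset_paths[OF H]
    by (auto simp: bdry_singleton pathDGA_def)
  have "pairing {C} (delta E (delta E a))" using C by (simp add: pairing_def)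
  also have "pairing {C} (delta E (delta E a)) = pairing (bdry {C}) (delta E a)"
    using pairing_bdry_delta[OF H fE c da] by simp
  also have "\<dots> = pairing (bdry (bdry {C})) a"
    using pairing_bdry_delta[OF H fE bc a] by simp
  also have "bdry (bdry {C}) = {}" using bdry_bdry_eq_empty[OF H c] .
  finally show False by (simp add: pairing_def)
qed

theorem proposition2p15:
  fixes E :: "('v::finite) hedge set"
  assumes "is_higraph E"
  shows "(\<forall>a\<in>pathDGA E. \<forall>b\<in>pathDGA E. pairing (bdry a) b = pairing a (delta E b))
       \<and> (\<forall>a\<in>pathDGA E. bdry (bdry a) = {})
       \<and> (\<forall>a\<in>pathDGA E. delta E (delta E a) = {})"
proof -
  have "finite E" by (rule finite_subset[OF subset_UNIV]) simp
  then show ?thesis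
    using pairing_bdry_delta bdry_bdry_eq_empty delta_delta_eq_empty assms by blast
qed

end
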